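(* Let $\rho\in\mathbb R$, let $\mathbf a=\{a_n\}_{n\ge1}$ be a sequence of non-negative real numbers, and let $\kappa_{\mathbf a}(s,u)=\sum_{n\ge1}a_nn^{-s-\bar u}$ be the diagonal Dirichlet series kernel on $\mathbb H_\rho\times\mathbb H_\rho$ with reproducing kernel Hilbert space $\mathscr H_{\mathbf a}$. Let $\mathbf b=\{b_n\}$ be an admissible sequence of real numbers with $\mathrm{supp}(\mathbf b)=\mathrm{supp}(\mathbf a)$, and for $\beta\in\mathbb R$ let $f_\beta(s)=\sum_{n\in\mathrm{supp}(\mathbf b)}n^{i\beta}b_nn^{-s}$, $s\in\mathbb H_\rho$ (convergent on $\mathbb H_\rho$). Assume $\{f_\beta:\beta\in\mathbb R\}$ is a total subset of $\mathscr H_{\mathbf a}$. Let $T$ be the linear operator with domain $\mathcal D(T)=\mathrm{span}\{f_\beta:\beta\in\mathbb R\}$ defined by $Tf_\beta=i\beta f_\beta$, extended linearly. Then $T$ is a $\mathscr T$-homogeneous operator in $\mathscr H_{\mathbf a}$. If, in addition, there exists $\delta>0$ with $\sum_{n\in\mathrm{supp}(\mathbf a)}n^{2\delta}b_n^2/a_n<\infty$, then the domain $\mathcal D(T^* )$ of the Hilbert space adjoint of $T$ is $\{0\}$.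
   Context: $\mathbb H_\rho=\{\Re s>\rho\}$. $\mathscr H_{\mathbf a}$ is the Hilbert space of functions on $\mathbb H_\rho$ with $\kappa_{\mathbf a}(\cdot,t)\in\mathscr H_{\mathbf a}$ and $\langle f,\kappa_{\mathbf a}(\cdot,t)\rangle=f(t)$. A real sequence $\mathbf b$ is admissible if $\mathrm{supp}(\mathbf b)=\{n:b_n\ne0\}$ is an infinite subset of $\mathbb N$ closed under multiplication and contains $p,q\ne1$ with $\gcd(p,q)=1$. A densely defined linear operator $T$ in a complex Hilbert space $\mathcal H$ is $\mathscr T$-homogeneous if for every $c\in\mathbb R$ there is a unitary $U_c$ on $\mathcal H$ with $U_c\mathcal D(T)\subseteq\mathcal D(T)$ and $U_cTf=(T-icI)U_cf$ for all $f\in\mathcal D(T)$. *)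

theory Defs
  imports "HOL-Analysis.Analysis"
begin

definition halfplane :: "real \<Rightarrow> complex set" where
  "halfplane \<rho> = {s. Re s > \<rho>}"

definition supp :: "(nat \<Rightarrow> real) \<Rightarrow> nat set" where
  "supp b = {n. n \<ge> 1 \<and> b n \<noteq> 0}"

definition admissible :: "(nat \<Rightarrow> real) \<Rightarrow> bool" where
  "admissible b \<longleftrightarrow> infinite (supp b)
     \<and> (\<forall>m\<in>supp b. \<forall>n\<in>supp b. m * n \<in> supp b)
     \<and> (\<exists>p\<in>supp b. \<exists>q\<in>supp b. p \<noteq> 1 \<and> q \<noteq> 1 \<and> coprime p q)"

definition dkernel :: "(nat \<Rightarrow> real) \<Rightarrow> real \<Rightarrow> complex \<Rightarrow> complex \<Rightarrow> complex" where
  "dkernel a \<rho> s u = (if s \<in> halfplane \<rho>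
     then (\<Sum>n. complex_of_real (a (Suc n)) * of_nat (Suc n) powr (- s - cnj u)) else 0)"

text \<open>f_beta(s) = sum_{n in supp b} n^(i beta) b_n n^(-s), on H_rho (0 outside).
  Terms with n outside supp b vanish, so summing over all n >= 1 is the same.\<close>
definition fbeta :: "(nat \<Rightarrow> real) \<Rightarrow> real \<Rightarrow> real \<Rightarrow> complex \<Rightarrow> complex" where
  "fbeta b \<rho> \<beta> s = (if s \<in> halfplane \<rho>
     then (\<Sum>n. of_nat (Suc n) powr (\<i> * of_real \<beta>) * complex_of_real (b (Suc n))
                 * of_nat (Suc n) powr (- s)) else 0)"

definition hnorm :: "((complex \<Rightarrow> complex) \<Rightarrow> (complex \<Rightarrow> complex) \<Rightarrow> complex)
     \<Rightarrow> (complex \<Rightarrow> complex) \<Rightarrow> real" where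
  "hnorm ip x = sqrt (Re (ip x x))"

definition chilbert :: "(complex \<Rightarrow> complex) set
     \<Rightarrow> ((complex \<Rightarrow> complex) \<Rightarrow> (complex \<Rightarrow> complex) \<Rightarrow> complex) \<Rightarrow> bool" where
  "chilbert H ip \<longleftrightarrow>
     (\<lambda>_. 0) \<in> H
   \<and> (\<forall>x\<in>H. \<forall>y\<in>H. (\<lambda>s. x s + y s) \<in> H)
   \<and> (\<forall>c. \<forall>x\<in>H. (\<lambda>s. c * x s) \<in> H)
   \<and> (\<forall>x\<in>H. \<forall>y\<in>H. \<forall>z\<in>H. ip (\<lambda>s. x s + y s) z = ip x z + ip y z)
   \<and> (\<forall>c. \<forall>x\<in>H. \<forall>z\<in>H. ip (\<lambda>s. c * x s) z = c * ip x z)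
   \<and> (\<forall>x\<in>H. \<forall>y\<in>H. ip y x = cnj (ip x y))
   \<and> (\<forall>x\<in>H. Im (ip x x) = 0 \<and> Re (ip x x) \<ge> 0)
   \<and> (\<forall>x\<in>H. ip x x = 0 \<longrightarrow> x = (\<lambda>_. 0))
   \<and> (\<forall>X. (\<forall>n. X n \<in> H) \<and> (\<forall>e>0. \<exists>N. \<forall>m\<ge>N. \<forall>n\<ge>N. hnorm ip (\<lambda>s. X m s - X n s) < e)
          \<longrightarrow> (\<exists>L\<in>H. (\<lambda>n. hnorm ip (\<lambda>s. X n s - L s)) \<longlonglongrightarrow> 0))"

text \<open>(H, ip) is the reproducing kernel Hilbert space of the kernel K on the
  half-plane H_rho: functions on H_rho (encoded as vanishing outside H_rho),
  K(.,t) in H and <f, K(.,t)> = f(t) for t in H_rho.  Such a space is unique.\<close>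
definition is_rkhs :: "(complex \<Rightarrow> complex) set
     \<Rightarrow> ((complex \<Rightarrow> complex) \<Rightarrow> (complex \<Rightarrow> complex) \<Rightarrow> complex)
     \<Rightarrow> real \<Rightarrow> (complex \<Rightarrow> complex \<Rightarrow> complex) \<Rightarrow> bool" where
  "is_rkhs H ip \<rho> K \<longleftrightarrow> chilbert H ip
   \<and> (\<forall>f\<in>H. \<forall>s. s \<notin> halfplane \<rho> \<longrightarrow> f s = 0)
   \<and> (\<forall>t\<in>halfplane \<rho>. (\<lambda>s. K s t) \<in> H \<and> (\<forall>f\<in>H. ip f (\<lambda>s. K s t) = f t))"

definition cspan :: "(complex \<Rightarrow> complex) set \<Rightarrow> (complex \<Rightarrow> complex) set" where
  "cspan S = {g. \<exists>F c. finite F \<and> F \<subseteq> S \<and> g = (\<lambda>s. \<Sum>h\<in>F. c h * h s)}"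

definition total_in :: "(complex \<Rightarrow> complex) set
     \<Rightarrow> ((complex \<Rightarrow> complex) \<Rightarrow> (complex \<Rightarrow> complex) \<Rightarrow> complex)
     \<Rightarrow> (complex \<Rightarrow> complex) set \<Rightarrow> bool" where
  "total_in H ip S \<longleftrightarrow> S \<subseteq> H
     \<and> (\<forall>x\<in>H. \<forall>e>0. \<exists>g\<in>cspan S. hnorm ip (\<lambda>s. x s - g s) < e)"

definition linear_on :: "(complex \<Rightarrow> complex) set
     \<Rightarrow> ((complex \<Rightarrow> complex) \<Rightarrow> (complex \<Rightarrow> complex)) \<Rightarrow> bool" where
  "linear_on D T \<longleftrightarrow> (\<forall>x\<in>D. \<forall>y\<in>D. T (\<lambda>s. x s + y s) = (\<lambda>s. T x s + T y s))
     \<and> (\<forall>c. \<forall>x\<in>D. T (\<lambda>s. c * x s) = (\<lambda>s. c * T x s))"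

definition unitary_on :: "(complex \<Rightarrow> complex) set
     \<Rightarrow> ((complex \<Rightarrow> complex) \<Rightarrow> (complex \<Rightarrow> complex) \<Rightarrow> complex)
     \<Rightarrow> ((complex \<Rightarrow> complex) \<Rightarrow> (complex \<Rightarrow> complex)) \<Rightarrow> bool" where
  "unitary_on H ip U \<longleftrightarrow> linear_on H U \<and> bij_betw U H H
     \<and> (\<forall>x\<in>H. \<forall>y\<in>H. ip (U x) (U y) = ip x y)"

definition T_homogeneous :: "(complex \<Rightarrow> complex) set
     \<Rightarrow> ((complex \<Rightarrow> complex) \<Rightarrow> (complex \<Rightarrow> complex) \<Rightarrow> complex)
     \<Rightarrow> (complex \<Rightarrow> complex) set
     \<Rightarrow> ((complex \<Rightarrow> complex) \<Rightarrow> (complex \<Rightarrow> complex)) \<Rightarrow> bool" where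
  "T_homogeneous H ip D T \<longleftrightarrow>
     (\<forall>c::real. \<exists>U. unitary_on H ip U \<and> U ` D \<subseteq> D
        \<and> (\<forall>f\<in>D. U (T f) = (\<lambda>s. T (U f) s - \<i> * of_real c * U f s)))"

definition adj_domain :: "(complex \<Rightarrow> complex) set
     \<Rightarrow> ((complex \<Rightarrow> complex) \<Rightarrow> (complex \<Rightarrow> complex) \<Rightarrow> complex)
     \<Rightarrow> (complex \<Rightarrow> complex) set
     \<Rightarrow> ((complex \<Rightarrow> complex) \<Rightarrow> (complex \<Rightarrow> complex)) \<Rightarrow> (complex \<Rightarrow> complex) set" where
  "adj_domain H ip D T = {g\<in>H. \<exists>h\<in>H. \<forall>f\<in>D. ip (T f) g = ip f h}"

end

(* Vertical translation U_c f(s) = f(s - i c) acts unitarily on H_a: the kernel satisfies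
   kappa(s - i c, t) = kappa(s, t + i c), so U_c is isometric on finite combinations of kernel
   functions, which are dense because only 0 is orthogonal to all of them, and completeness extends
   it to H_a. Since U_c f_beta = f_(beta + c), U_c carries T to T - i c I on span{f_beta}.

   If g lies in the domain of T*, then i beta <f_beta, g> = <f_beta, T* g>, so <f_beta, g> = O(1/beta).
   For a kernel combination v, beta |-> <f_beta, v> is the absolutely convergent series
   sum_n b_n w_n n^(i beta), and Bohr's mean value argument bounds every |b_n w_n| by
   ||f_0|| ||v - g||. Approximating g by kernel combinations v_k, these coefficients tend to 0 for each n
   while sum_n a_n |w_kn|^2 = ||v_k||^2 stays bounded; as sum_n b_n^2 / a_n is finite, <f_beta, v_k> -> 0.
   Hence g is orthogonal to every f_beta, and g = 0 by totality. *)

theory Submission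
  imports Defs
begin

lemma cspan_zero: "(\<lambda>_. 0) \<in> cspan S"
  unfolding cspan_def by (intro CollectI exI[of _ "{}"]) simp

lemma cspan_superset: "h \<in> S \<Longrightarrow> h \<in> cspan S"
  unfolding cspan_def by (intro CollectI exI[of _ "{h}"] exI[of _ "\<lambda>_. 1"]) simp

lemma cspan_scale:
  assumes "x \<in> cspan S"
  shows "(\<lambda>s. c * x s) \<in> cspan S"
proof -
  obtain F d where "finite F" "F \<subseteq> S" "x = (\<lambda>s. \<Sum>h\<in>F. d h * h s)"
    using assms unfolding cspan_def by blast
  then show ?thesis
    unfolding cspan_def by (intro CollectI exI[of _ F] exI[of _ "\<lambda>h. c * d h"])
      (simp add: sum_distrib_left mult.assoc)
qed

lemma cspan_add:
  assumes "x \<in> cspan S" "y \<in> cspan S"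
  shows "(\<lambda>s. x s + y s) \<in> cspan S"
proof -
  obtain F c G d where F: "finite F" "F \<subseteq> S" "x = (\<lambda>s. \<Sum>h\<in>F. c h * h s)"
    and G: "finite G" "G \<subseteq> S" "y = (\<lambda>s. \<Sum>h\<in>G. d h * h s)"
    using assms unfolding cspan_def by blast
  define e where "e h = (if h \<in> F then c h else 0) + (if h \<in> G then d h else 0)" for h
  have "(\<Sum>h\<in>F \<union> G. e h * h s) = (\<Sum>h\<in>F. c h * h s) + (\<Sum>h\<in>G. d h * h s)" for s
  proof -
    have "(\<Sum>h\<in>F \<union> G. e h * h s)
        = (\<Sum>h\<in>F \<union> G. (if h \<in> F then c h * h s else 0) + (if h \<in> G then d h * h s else 0))"
      by (rule sum.cong) (simp_all add: e_def distrib_right)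
    also have "\<dots> = (\<Sum>h\<in>F \<union> G. if h \<in> F then c h * h s else 0)
        + (\<Sum>h\<in>F \<union> G. if h \<in> G then d h * h s else 0)"
      by (rule sum.distrib)
    also have "\<dots> = (\<Sum>h\<in>F. c h * h s) + (\<Sum>h\<in>G. d h * h s)"
      using F(1) G(1) by (simp add: sum.inter_restrict[symmetric] Int_absorb1 Int_absorb2)
    finally show ?thesis .
  qed
  then show ?thesis
    using F G unfolding cspan_def by (intro CollectI exI[of _ "F \<union> G"] exI[of _ e]) auto
qed

lemma cspan_sum_mem:
  "finite B \<Longrightarrow> (\<And>t. t \<in> B \<Longrightarrow> f t \<in> S) \<Longrightarrow> (\<lambda>s. \<Sum>t\<in>B. d t * f t s) \<in> cspan S"
proof (induction B rule: finite_induct)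
  case empty
  then show ?case using cspan_zero by simp
next
  case (insert t B)
  have "(\<lambda>s. d t * f t s) \<in> cspan S"
    using insert.prems cspan_superset cspan_scale by blast
  moreover have "(\<lambda>s. \<Sum>t\<in>B. d t * f t s) \<in> cspan S"
    using insert by blast
  ultimately have "(\<lambda>s. d t * f t s + (\<Sum>t\<in>B. d t * f t s)) \<in> cspan S"
    by (rule cspan_add)
  with insert.hyps show ?case by simp
qed

lemma cspan_imageE:
  assumes "g \<in> cspan (f ` A)"
  obtains B d where "finite B" "B \<subseteq> A" "g = (\<lambda>s. \<Sum>t\<in>B. d t * f t s)"
proof -
  obtain F c where F: "finite F" "F \<subseteq> f ` A" and g: "g = (\<lambda>s. \<Sum>h\<in>F. c h * h s)"
    using assms unfolding cspan_def by blast
  obtain B where B: "B \<subseteq> A" "inj_on f B" "F = f ` B"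
    using subset_image_inj[THEN iffD1, OF F(2)] by blast
  have "finite B"
    using F(1) finite_image_iff[OF B(2)] unfolding B(3) by simp
  moreover have "g = (\<lambda>s. \<Sum>t\<in>B. c (f t) * f t s)"
    unfolding g B(3) using B(2) by (simp add: sum.reindex)
  ultimately show ?thesis
    by (rule that[OF _ B(1)])
qed

lemma linear_on_cspan_sum:
  assumes T: "linear_on (cspan S) T" and "finite B" "\<And>t. t \<in> B \<Longrightarrow> f t \<in> S"
  shows "T (\<lambda>s. \<Sum>t\<in>B. d t * f t s) = (\<lambda>s. \<Sum>t\<in>B. d t * T (f t) s)"
  using assms(2,3)
proof (induction B rule: finite_induct)
  case empty
  have "\<forall>c. \<forall>x\<in>cspan S. T (\<lambda>s. c * x s) = (\<lambda>s. c * T x s)"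
    using T unfolding linear_on_def by blast
  from this[rule_format, where c=0, OF cspan_zero] show ?case by simp
next
  case (insert t B)
  have ft: "(\<lambda>s. d t * f t s) \<in> cspan S"
    using insert.prems cspan_scale cspan_superset by blast
  have rest: "(\<lambda>s. \<Sum>t\<in>B. d t * f t s) \<in> cspan S"
    using insert.prems cspan_sum_mem[OF insert.hyps(1)] by blast
  have "T (\<lambda>s. \<Sum>t\<in>insert t B. d t * f t s)
      = (\<lambda>s. T (\<lambda>s. d t * f t s) s + T (\<lambda>s. \<Sum>t\<in>B. d t * f t s) s)"
    using insert.hyps T ft rest unfolding linear_on_def by simp
  also have "T (\<lambda>s. d t * f t s) = (\<lambda>s. d t * T (f t) s)"
    using T insert.prems cspan_superset unfolding linear_on_def by blast
  finally show ?case using insert by simp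
qed

section \<open>Hilbert spaces of functions\<close>

definition hconverges :: "((complex \<Rightarrow> complex) \<Rightarrow> (complex \<Rightarrow> complex) \<Rightarrow> complex)
     \<Rightarrow> (nat \<Rightarrow> complex \<Rightarrow> complex) \<Rightarrow> (complex \<Rightarrow> complex) \<Rightarrow> bool" where
  "hconverges ip X x \<longleftrightarrow> (\<lambda>n. hnorm ip (\<lambda>s. X n s - x s)) \<longlonglongrightarrow> 0"

locale fun_hilbert =
  fixes H :: "(complex \<Rightarrow> complex) set"
    and ip :: "(complex \<Rightarrow> complex) \<Rightarrow> (complex \<Rightarrow> complex) \<Rightarrow> complex"
  assumes chilbert: "chilbert H ip"
begin

lemma zero_mem: "(\<lambda>_. 0) \<in> H"
  and add_mem: "x \<in> H \<Longrightarrow> y \<in> H \<Longrightarrow> (\<lambda>s. x s + y s) \<in> H"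
  and scale_mem: "x \<in> H \<Longrightarrow> (\<lambda>s. c * x s) \<in> H"
  and ip_add_left: "x \<in> H \<Longrightarrow> y \<in> H \<Longrightarrow> z \<in> H \<Longrightarrow> ip (\<lambda>s. x s + y s) z = ip x z + ip y z"
  and ip_scale_left: "x \<in> H \<Longrightarrow> z \<in> H \<Longrightarrow> ip (\<lambda>s. c * x s) z = c * ip x z"
  and ip_conj_sym: "x \<in> H \<Longrightarrow> y \<in> H \<Longrightarrow> ip y x = cnj (ip x y)"
  and ip_self_nonneg: "x \<in> H \<Longrightarrow> Im (ip x x) = 0 \<and> Re (ip x x) \<ge> 0"
  and ip_self_eq_0: "x \<in> H \<Longrightarrow> ip x x = 0 \<Longrightarrow> x = (\<lambda>_. 0)"
  and complete: "(\<And>n. X n \<in> H) \<Longrightarrow> (\<forall>e>0. \<exists>N. \<forall>m\<ge>N. \<forall>n\<ge>N. hnorm ip (\<lambda>s. X m s - X n s) < e)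
      \<Longrightarrow> \<exists>L\<in>H. hconverges ip X L"
  using chilbert unfolding chilbert_def hconverges_def by blast+

lemma diff_mem: "x \<in> H \<Longrightarrow> y \<in> H \<Longrightarrow> (\<lambda>s. x s - y s) \<in> H"
  using add_mem[of x "\<lambda>s. (-1) * y s"] scale_mem[of y "-1"] by simp

lemma sum_mem: "finite B \<Longrightarrow> (\<And>t. t \<in> B \<Longrightarrow> f t \<in> H) \<Longrightarrow> (\<lambda>s. \<Sum>t\<in>B. d t * f t s) \<in> H"
proof (induction B rule: finite_induct)
  case empty
  then show ?case using zero_mem by simp
next
  case (insert t B)
  then show ?case using add_mem[OF scale_mem[of "f t" "d t"], of "\<lambda>s. \<Sum>t\<in>B. d t * f t s"] by simp
qed

lemma ip_diff_left: "x \<in> H \<Longrightarrow> y \<in> H \<Longrightarrow> z \<in> H \<Longrightarrow> ip (\<lambda>s. x s - y s) z = ip x z - ip y z"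
  using ip_add_left[of x "\<lambda>s. (-1) * y s" z] ip_scale_left[of y z "-1"] scale_mem[of y "-1"] by simp

lemma ip_zero_left: "z \<in> H \<Longrightarrow> ip (\<lambda>_. 0) z = 0"
  using ip_scale_left[OF zero_mem, of z 0] by simp

lemma ip_sum_left:
  "finite B \<Longrightarrow> (\<And>t. t \<in> B \<Longrightarrow> f t \<in> H) \<Longrightarrow> z \<in> H \<Longrightarrow>
    ip (\<lambda>s. \<Sum>t\<in>B. d t * f t s) z = (\<Sum>t\<in>B. d t * ip (f t) z)"
proof (induction B rule: finite_induct)
  case empty
  then show ?case using ip_zero_left by simp
next
  case (insert t B)
  then show ?case
    using ip_add_left[OF scale_mem sum_mem, of "f t" B f z "d t" d] ip_scale_left[of "f t" z "d t"]
    by simp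
qed

lemma ip_diff_right: "x \<in> H \<Longrightarrow> y \<in> H \<Longrightarrow> z \<in> H \<Longrightarrow> ip z (\<lambda>s. x s - y s) = ip z x - ip z y"
  using ip_conj_sym[of "\<lambda>s. x s - y s" z] ip_diff_left[of x y z] ip_conj_sym[of x z] ip_conj_sym[of y z]
    diff_mem by simp

lemma ip_scale_right: "x \<in> H \<Longrightarrow> z \<in> H \<Longrightarrow> ip z (\<lambda>s. c * x s) = cnj c * ip z x"
  using ip_conj_sym[of "\<lambda>s. c * x s" z] ip_scale_left[of x z c] ip_conj_sym[of x z] scale_mem by simp

lemma ip_zero_right: "z \<in> H \<Longrightarrow> ip z (\<lambda>_. 0) = 0"
  using ip_conj_sym[OF zero_mem, of z] ip_zero_left by simp

lemma ip_sum_right: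
  "finite B \<Longrightarrow> (\<And>t. t \<in> B \<Longrightarrow> f t \<in> H) \<Longrightarrow> z \<in> H \<Longrightarrow>
    ip z (\<lambda>s. \<Sum>t\<in>B. d t * f t s) = (\<Sum>t\<in>B. cnj (d t) * ip z (f t))"
  proof -
  assume B: "finite B" and f: "\<And>t. t \<in> B \<Longrightarrow> f t \<in> H" and z: "z \<in> H"
  have "ip z (\<lambda>s. \<Sum>t\<in>B. d t * f t s) = cnj (\<Sum>t\<in>B. d t * ip (f t) z)"
    using ip_conj_sym[OF sum_mem[OF B f] z] ip_sum_left[OF B f z] by simp
  also have "\<dots> = (\<Sum>t\<in>B. cnj (d t) * ip z (f t))"
    using ip_conj_sym[OF f z] by simp
  finally show ?thesis .
qed

lemma hnorm_nonneg: "x \<in> H \<Longrightarrow> hnorm ip x \<ge> 0"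
  using ip_self_nonneg by (simp add: hnorm_def)

lemma ip_self_eq_hnorm_sq: "x \<in> H \<Longrightarrow> ip x x = of_real ((hnorm ip x)^2)"
  using ip_self_nonneg[of x] by (simp add: hnorm_def complex_eq_iff)

lemma hnorm_sq: "x \<in> H \<Longrightarrow> (hnorm ip x)^2 = Re (ip x x)"
  using ip_self_eq_hnorm_sq by simp

lemma hnorm_eq_0_iff: "x \<in> H \<Longrightarrow> hnorm ip x = 0 \<longleftrightarrow> x = (\<lambda>_. 0)"
  using ip_self_eq_hnorm_sq[of x] ip_self_eq_0[of x] ip_zero_left[OF zero_mem] by (auto simp: hnorm_def)

lemma hnorm_diff_scale_sq:
  assumes "x \<in> H" "y \<in> H"
  shows "(hnorm ip (\<lambda>s. x s - t * y s))^2
    = (hnorm ip x)^2 - 2 * Re (cnj t * ip x y) + (cmod t)^2 * (hnorm ip y)^2"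
proof -
  have ty: "(\<lambda>s. t * y s) \<in> H" using assms scale_mem by blast
  have "ip (\<lambda>s. x s - t * y s) (\<lambda>s. x s - t * y s)
      = ip x x - cnj t * ip x y - t * (cnj (ip x y) - cnj t * ip y y)"
    using assms ty diff_mem
    by (simp add: ip_diff_left ip_diff_right ip_scale_left ip_scale_right ip_conj_sym[of x y])
      (simp add: algebra_simps)
  also have "\<dots> = ip x x - (cnj t * ip x y + cnj (cnj t * ip x y)) + (t * cnj t) * ip y y"
    by (simp add: algebra_simps)
  also have "\<dots> = of_real ((hnorm ip x)^2 - 2 * Re (cnj t * ip x y) + (cmod t)^2 * (hnorm ip y)^2)"
    unfolding complex_add_cnj complex_norm_square[symmetric] using assms by (simp add: ip_self_eq_hnorm_sq)
  finally show ?thesis using hnorm_sq[OF diff_mem[OF assms(1) ty]] by simp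
qed

lemma cauchy_schwarz:
  assumes x: "x \<in> H" and y: "y \<in> H"
  shows "cmod (ip x y) \<le> hnorm ip x * hnorm ip y"
proof (cases "hnorm ip y = 0")
  case True
  then have "ip x y = 0" using y x hnorm_eq_0_iff ip_zero_right by simp
  with True show ?thesis by simp
next
  case False
  define r where "r = (hnorm ip y)^2"
  have r: "r > 0" using False hnorm_nonneg[of y] unfolding r_def by simp
  define t where "t = ip x y / of_real r"
  have "cnj t * ip x y = ip x y * cnj (ip x y) / of_real r"
    by (simp add: t_def)
  then have "cnj t * ip x y = of_real ((cmod (ip x y))^2 / r)"
    by (simp only: complex_norm_square[symmetric] of_real_divide)
  moreover have "(cmod t)^2 * r = (cmod (ip x y))^2 / r"
    using r by (simp add: t_def norm_divide power_divide power2_eq_square)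
  ultimately have "(hnorm ip (\<lambda>s. x s - t * y s))^2 = (hnorm ip x)^2 - (cmod (ip x y))^2 / r"
    using hnorm_diff_scale_sq[OF x y, of t] unfolding r_def by simp
  then have "(cmod (ip x y))^2 / r \<le> (hnorm ip x)^2"
    using zero_le_power2[of "hnorm ip (\<lambda>s. x s - t * y s)"] by linarith
  then have "(cmod (ip x y))^2 \<le> (hnorm ip x * hnorm ip y)^2"
    using r by (simp add: r_def pos_divide_le_eq power_mult_distrib)
  then show ?thesis
    by (rule power2_le_imp_le) (simp add: hnorm_nonneg x y)
qed

lemma adjoint_ip_eigenvector_bound:
  assumes f: "f \<in> H" and g: "g \<in> H" and h: "h \<in> H" and \<beta>: "\<beta> > 0"
    and adjoint: "ip (\<lambda>s. \<i> * of_real \<beta> * f s) g = ip f h"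
  shows "cmod (ip f g) \<le> hnorm ip f * hnorm ip h / \<beta>"
proof -
  have "\<beta> * cmod (ip f g) = cmod (ip (\<lambda>s. \<i> * of_real \<beta> * f s) g)"
    using \<beta> by (simp add: ip_scale_left[OF f g] norm_mult)
  also have "\<dots> = cmod (ip f h)"
    by (simp only: adjoint)
  also have "\<dots> \<le> hnorm ip f * hnorm ip h"
    by (rule cauchy_schwarz[OF f h])
  finally show ?thesis
    using \<beta> by (simp add: field_simps)
qed

lemma hnorm_triangle:
  assumes x: "x \<in> H" and y: "y \<in> H"
  shows "hnorm ip (\<lambda>s. x s + y s) \<le> hnorm ip x + hnorm ip y"
proof -
  have "(hnorm ip (\<lambda>s. x s - (-1) * y s))^2 \<le> (hnorm ip x)^2 + 2 * (hnorm ip x * hnorm ip y) + (hnorm ip y)^2"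
    using hnorm_diff_scale_sq[OF x y, of "-1"] cauchy_schwarz[OF x y] complex_Re_le_cmod[of "ip x y"]
    by simp
  then have "(hnorm ip (\<lambda>s. x s + y s))^2 \<le> (hnorm ip x + hnorm ip y)^2"
    by (simp add: power2_sum)
  then show ?thesis
    by (rule power2_le_imp_le) (simp add: hnorm_nonneg x y)
qed

lemma hnorm_scale:
  assumes x: "x \<in> H"
  shows "hnorm ip (\<lambda>s. c * x s) = cmod c * hnorm ip x"
proof -
  have "ip (\<lambda>s. c * x s) (\<lambda>s. c * x s) = (c * cnj c) * ip x x"
    using x scale_mem by (simp add: ip_scale_left ip_scale_right)
  also have "\<dots> = of_real ((cmod c * hnorm ip x)^2)"
    by (simp only: complex_norm_square[symmetric] ip_self_eq_hnorm_sq[OF x] of_real_mult[symmetric]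
        power_mult_distrib)
  finally show ?thesis
    using hnorm_nonneg[OF x] by (simp add: hnorm_def)
qed

lemma hnorm_minus_commute: "x \<in> H \<Longrightarrow> y \<in> H \<Longrightarrow> hnorm ip (\<lambda>s. x s - y s) = hnorm ip (\<lambda>s. y s - x s)"
  using hnorm_scale[OF diff_mem, of x y "-1"] by simp

lemma hnorm_diff_triangle:
  "x \<in> H \<Longrightarrow> y \<in> H \<Longrightarrow> z \<in> H \<Longrightarrow>
    hnorm ip (\<lambda>s. x s - z s) \<le> hnorm ip (\<lambda>s. x s - y s) + hnorm ip (\<lambda>s. y s - z s)"
  using hnorm_triangle[OF diff_mem diff_mem, of x y y z] by simp

lemma parallelogram:
  assumes "x \<in> H" "y \<in> H"
  shows "(hnorm ip (\<lambda>s. x s + y s))^2 + (hnorm ip (\<lambda>s. x s - y s))^2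
    = 2 * (hnorm ip x)^2 + 2 * (hnorm ip y)^2"
  using hnorm_diff_scale_sq[OF assms, of 1] hnorm_diff_scale_sq[OF assms, of "-1"] by simp

lemma hconverges_const: "x \<in> H \<Longrightarrow> hconverges ip (\<lambda>_. x) x"
  using hnorm_eq_0_iff[OF zero_mem] by (simp add: hconverges_def)

lemma hconverges_const_diff:
  "hconverges ip X p \<Longrightarrow> (\<And>n. X n \<in> H) \<Longrightarrow> p \<in> H \<Longrightarrow>
    hconverges ip (\<lambda>n s. u s - X n s) (\<lambda>s. u s - p s)"
  using hnorm_minus_commute[of p "X _"] by (simp add: hconverges_def)

lemma hconverges_ip:
  assumes X: "\<And>n. X n \<in> H" and Y: "\<And>n. Y n \<in> H" and x: "x \<in> H" and y: "y \<in> H"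
    and "hconverges ip X x" "hconverges ip Y y"
  shows "(\<lambda>n. ip (X n) (Y n)) \<longlonglongrightarrow> ip x y"
proof -
  define d where "d n = hnorm ip (\<lambda>s. X n s - x s)" for n
  define e where "e n = hnorm ip (\<lambda>s. Y n s - y s)" for n
  have d: "d \<longlonglongrightarrow> 0" and e: "e \<longlonglongrightarrow> 0"
    using assms(5,6) unfolding hconverges_def d_def e_def by simp_all
  have bound: "norm (ip (X n) (Y n) - ip x y) \<le> d n * (e n + hnorm ip y) + hnorm ip x * e n" for n
  proof -
    have "ip (X n) (Y n) - ip x y = ip (\<lambda>s. X n s - x s) (Y n) + ip x (\<lambda>s. Y n s - y s)"
      using ip_diff_left[OF X x Y, of n n] ip_diff_right[OF Y y x, of n] by simp
    moreover have "cmod (ip (\<lambda>s. X n s - x s) (Y n)) \<le> d n * (e n + hnorm ip y)"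
    proof -
      have "cmod (ip (\<lambda>s. X n s - x s) (Y n)) \<le> d n * hnorm ip (Y n)"
        unfolding d_def using cauchy_schwarz[OF diff_mem[OF X x] Y] .
      also have "\<dots> \<le> d n * (e n + hnorm ip y)"
        using hnorm_diff_triangle[OF Y y zero_mem, of n] hnorm_nonneg[OF diff_mem[OF X x]]
        unfolding d_def e_def by (intro mult_left_mono) simp_all
      finally show ?thesis .
    qed
    moreover have "cmod (ip x (\<lambda>s. Y n s - y s)) \<le> hnorm ip x * e n"
      unfolding e_def using cauchy_schwarz[OF x diff_mem[OF Y y]] .
    ultimately show ?thesis
      using norm_triangle_ineq[of "ip (\<lambda>s. X n s - x s) (Y n)" "ip x (\<lambda>s. Y n s - y s)"]
      by (simp only:)
  qed
  have "(\<lambda>n. d n * (e n + hnorm ip y) + hnorm ip x * e n) \<longlonglongrightarrow> 0 * (0 + hnorm ip y) + hnorm ip x * 0"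
    by (intro tendsto_intros d e)
  then have "(\<lambda>n. d n * (e n + hnorm ip y) + hnorm ip x * e n) \<longlonglongrightarrow> 0"
    by simp
  then have "(\<lambda>n. ip (X n) (Y n) - ip x y) \<longlonglongrightarrow> 0"
    by (rule Lim_null_comparison[rotated]) (simp add: bound)
  then show ?thesis by (rule LIM_zero_cancel)
qed

lemma hconverges_hnorm:
  assumes "\<And>n. X n \<in> H" "x \<in> H" "hconverges ip X x"
  shows "(\<lambda>n. hnorm ip (X n)) \<longlonglongrightarrow> hnorm ip x"
proof -
  have "(\<lambda>n. ip (X n) (X n)) \<longlonglongrightarrow> ip x x"
    by (rule hconverges_ip[OF assms(1,1,2,2,3,3)])
  then have "(\<lambda>n. sqrt (Re (ip (X n) (X n)))) \<longlonglongrightarrow> sqrt (Re (ip x x))"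
    by (intro tendsto_real_sqrt tendsto_Re)
  then show ?thesis
    unfolding hnorm_def .
qed

lemma hconverges_Cauchy:
  assumes X: "\<And>n. X n \<in> H" and x: "x \<in> H" and "hconverges ip X x"
  shows "\<forall>e>0. \<exists>N. \<forall>m\<ge>N. \<forall>n\<ge>N. hnorm ip (\<lambda>s. X m s - X n s) < e"
proof (intro allI impI)
  fix e :: real
  assume "e > 0"
  then have "\<forall>\<^sub>F n in sequentially. hnorm ip (\<lambda>s. X n s - x s) < e / 2"
    using assms(3) unfolding hconverges_def by (intro order_tendstoD(2)) auto
  then obtain N where N: "\<And>n. n \<ge> N \<Longrightarrow> hnorm ip (\<lambda>s. X n s - x s) < e / 2"
    unfolding eventually_sequentially by blast
  have "hnorm ip (\<lambda>s. X m s - X n s) < e" if "m \<ge> N" "n \<ge> N" for m n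
    using hnorm_diff_triangle[OF X x X, of m n] hnorm_minus_commute[OF X x, of n] N[OF that(1)] N[OF that(2)]
    by linarith
  then show "\<exists>N. \<forall>m\<ge>N. \<forall>n\<ge>N. hnorm ip (\<lambda>s. X m s - X n s) < e" by blast
qed

lemma minimizing_sequence_Cauchy:
  assumes V: "V \<subseteq> H" and midpoint: "\<And>v w. v \<in> V \<Longrightarrow> w \<in> V \<Longrightarrow> (\<lambda>s. (1/2) * (v s + w s)) \<in> V"
    and x: "x \<in> H" and X: "\<And>n. X n \<in> V"
    and m: "\<And>v. v \<in> V \<Longrightarrow> m \<le> (hnorm ip (\<lambda>s. x s - v s))^2"
    and lim: "(\<lambda>n. (hnorm ip (\<lambda>s. x s - X n s))^2) \<longlonglongrightarrow> m"
  shows "\<forall>e>0. \<exists>N. \<forall>j\<ge>N. \<forall>k\<ge>N. hnorm ip (\<lambda>s. X j s - X k s) < e"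
proof (intro allI impI)
  fix e :: real
  assume e: "e > 0"
  have "\<forall>\<^sub>F n in sequentially. (hnorm ip (\<lambda>s. x s - X n s))^2 < m + e^2 / 4"
    using lim e by (intro order_tendstoD(2)) auto
  then obtain N where N: "\<And>n. n \<ge> N \<Longrightarrow> (hnorm ip (\<lambda>s. x s - X n s))^2 < m + e^2 / 4"
    unfolding eventually_sequentially by blast
  have sq_less: "(hnorm ip (\<lambda>s. X j s - X k s))^2 < e^2" if "j \<ge> N" "k \<ge> N" for j k
  proof -
    have Xj: "X j \<in> H" and Xk: "X k \<in> H" using X V by auto
    define u where "u = (\<lambda>s. x s - X j s)"
    define w where "w = (\<lambda>s. x s - X k s)"
    have u: "u \<in> H" and w: "w \<in> H" unfolding u_def w_def using x Xj Xk diff_mem by auto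
    define c where "c = (\<lambda>s. x s - (1/2) * (X j s + X k s))"
    have c: "c \<in> H" unfolding c_def using x midpoint[OF X X] V diff_mem by blast
    have "(\<lambda>s. u s + w s) = (\<lambda>s. 2 * c s)"
      by (simp add: u_def w_def c_def fun_eq_iff algebra_simps)
    then have "(hnorm ip (\<lambda>s. u s + w s))^2 = 4 * (hnorm ip c)^2"
      using hnorm_scale[OF c, of 2] by (simp add: power_mult_distrib)
    moreover have "m \<le> (hnorm ip c)^2"
      unfolding c_def using m[OF midpoint[OF X X]] .
    moreover have "(\<lambda>s. u s - w s) = (\<lambda>s. X k s - X j s)"
      by (simp add: u_def w_def fun_eq_iff)
    ultimately have "(hnorm ip (\<lambda>s. X k s - X j s))^2 \<le> 2 * (hnorm ip u)^2 + 2 * (hnorm ip w)^2 - 4 * m"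
      using parallelogram[OF u w] by simp
    then show ?thesis
      using N[OF that(1)] N[OF that(2)] hnorm_minus_commute[OF Xj Xk] unfolding u_def w_def by simp
  qed
  have "hnorm ip (\<lambda>s. X j s - X k s) < e" if "j \<ge> N" "k \<ge> N" for j k
    using power_less_imp_less_base[OF sq_less[OF that] less_imp_le[OF e]] .
  then show "\<exists>N. \<forall>j\<ge>N. \<forall>k\<ge>N. hnorm ip (\<lambda>s. X j s - X k s) < e" by blast
qed

lemma orthogonal_if_minimal_distance:
  assumes y: "y \<in> H" and v: "v \<in> H" and minimal: "\<And>t. hnorm ip y \<le> hnorm ip (\<lambda>s. y s - t * v s)"
  shows "ip y v = 0"
proof -
  define z where "z = ip y v"
  define N where "N = (hnorm ip v)^2"
  define e where "e = 1 / (N + 1)"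
  have N: "N \<ge> 0" unfolding N_def by simp
  then have e: "e > 0" and eN: "e * N < 1" unfolding e_def by (simp_all add: field_simps)
  have "cnj (of_real e * z) * z = of_real e * (z * cnj z)"
    by simp
  then have re: "Re (cnj (of_real e * z) * z) = e * (cmod z)^2"
    by (simp only: complex_norm_square[symmetric] of_real_mult[symmetric] Re_complex_of_real)
  have nm: "(cmod (of_real e * z))^2 = e^2 * (cmod z)^2"
    using e by (simp add: norm_mult power_mult_distrib)
  have "(hnorm ip (\<lambda>s. y s - (of_real e * z) * v s))^2
      = (hnorm ip y)^2 - 2 * e * (cmod z)^2 + e^2 * (cmod z)^2 * N"
    using hnorm_diff_scale_sq[OF y v, of "of_real e * z"]
    unfolding z_def[symmetric] N_def[symmetric] re nm by (simp add: algebra_simps)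
  moreover have "(hnorm ip y)^2 \<le> (hnorm ip (\<lambda>s. y s - (of_real e * z) * v s))^2"
    using minimal hnorm_nonneg[OF y] by (rule power_mono)
  ultimately have "0 \<le> e * (cmod z)^2 * (e * N - 2)"
    by (simp add: algebra_simps power2_eq_square)
  then have "e * (cmod z)^2 \<le> 0"
    using eN by (simp add: zero_le_mult_iff)
  then have "cmod z = 0"
    using e by (simp add: mult_le_0_iff)
  then show ?thesis unfolding z_def by simp
qed

lemma best_approximation_limit:
  assumes V: "V \<subseteq> H" and add: "\<And>v w. v \<in> V \<Longrightarrow> w \<in> V \<Longrightarrow> (\<lambda>s. v s + w s) \<in> V"
    and scale: "\<And>c v. v \<in> V \<Longrightarrow> (\<lambda>s. c * v s) \<in> V" and nonempty: "V \<noteq> {}"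
    and x: "x \<in> H"
  obtains X p where "\<And>n. X n \<in> V" "p \<in> H" "hconverges ip X p"
    "\<And>t v. v \<in> V \<Longrightarrow> hnorm ip (\<lambda>s. x s - p s) \<le> hnorm ip (\<lambda>s. (x s - p s) - t * v s)"
proof -
  define q where "q v = (hnorm ip (\<lambda>s. x s - v s))^2" for v
  define m where "m = Inf (q ` V)"
  have m_le: "m \<le> q v" if "v \<in> V" for v
    unfolding m_def using that by (intro cInf_lower bdd_belowI[of _ 0]) (auto simp: q_def)
  have "\<exists>v\<in>V. q v < m + 1 / real (Suc n)" for n
    using cInf_lessD[of "q ` V" "m + 1 / real (Suc n)"] nonempty unfolding m_def by auto
  then obtain X where XV: "\<And>n. X n \<in> V" and X_less: "\<And>n. q (X n) < m + 1 / real (Suc n)"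
    by metis
  have XH: "\<And>n. X n \<in> H" using XV V by blast
  have qX: "(\<lambda>n. q (X n)) \<longlonglongrightarrow> m"
  proof (rule tendsto_sandwich[of "\<lambda>_. m" _ _ "\<lambda>n. m + 1 / real (Suc n)"])
    show "\<forall>\<^sub>F n in sequentially. m \<le> q (X n)" using m_le XV by simp
    show "\<forall>\<^sub>F n in sequentially. q (X n) \<le> m + 1 / real (Suc n)"
      by (intro always_eventually allI less_imp_le X_less)
    show "(\<lambda>n. m + 1 / real (Suc n)) \<longlonglongrightarrow> m"
      using tendsto_add[OF tendsto_const LIMSEQ_Suc[OF lim_inverse_n']] by simp
  qed simp
  have midpoint: "(\<lambda>s. (1/2) * (v s + w s)) \<in> V" if "v \<in> V" "w \<in> V" for v w
    using scale add that by blast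
  obtain p where p: "p \<in> H" and Xp: "hconverges ip X p"
    using complete[OF XH minimizing_sequence_Cauchy[OF V midpoint x XV m_le[unfolded q_def] qX[unfolded q_def]]]
    by blast
  have dist_lim: "(\<lambda>n. (hnorm ip (\<lambda>s. u s - X n s))^2) \<longlonglongrightarrow> (hnorm ip (\<lambda>s. u s - p s))^2"
    if "u \<in> H" for u
    using hconverges_hnorm[OF diff_mem[OF that XH] diff_mem[OF that p] hconverges_const_diff[OF Xp XH p]]
    by (rule tendsto_power)
  have qp: "(hnorm ip (\<lambda>s. x s - p s))^2 = m"
    using LIMSEQ_unique[OF dist_lim[OF x] qX[unfolded q_def]] .
  have "hnorm ip (\<lambda>s. x s - p s) \<le> hnorm ip (\<lambda>s. (x s - p s) - t * v s)" if v: "v \<in> V" for t v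
  proof -
    define u where "u = (\<lambda>s. x s - t * v s)"
    have u: "u \<in> H" unfolding u_def using x v V diff_mem scale_mem by blast
    have "m \<le> (hnorm ip (\<lambda>s. u s - X n s))^2" for n
      using m_le[OF add[OF XV scale[OF v]], of n t] unfolding q_def u_def
      by (simp add: algebra_simps)
    then have "m \<le> (hnorm ip (\<lambda>s. u s - p s))^2"
      using LIMSEQ_le_const[OF dist_lim[OF u]] by blast
    then have "(hnorm ip (\<lambda>s. x s - p s))^2 \<le> (hnorm ip (\<lambda>s. (x s - p s) - t * v s))^2"
      unfolding qp u_def by (simp add: algebra_simps)
    then show ?thesis
      using power2_le_imp_le hnorm_nonneg diff_mem[OF diff_mem[OF x p] scale_mem[of v t]] v V by blast
  qed
  then show ?thesis
    using that XV p Xp by blast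
qed

lemma dense_if_orthogonal_complement_trivial:
  assumes V: "V \<subseteq> H" and add: "\<And>v w. v \<in> V \<Longrightarrow> w \<in> V \<Longrightarrow> (\<lambda>s. v s + w s) \<in> V"
    and scale: "\<And>c v. v \<in> V \<Longrightarrow> (\<lambda>s. c * v s) \<in> V" and nonempty: "V \<noteq> {}"
    and orth: "\<And>y. y \<in> H \<Longrightarrow> (\<And>v. v \<in> V \<Longrightarrow> ip y v = 0) \<Longrightarrow> y = (\<lambda>_. 0)"
    and x: "x \<in> H"
  obtains X where "\<And>n. X n \<in> V" "hconverges ip X x"
proof -
  obtain X p where X: "\<And>n. X n \<in> V" and p: "p \<in> H" and Xp: "hconverges ip X p"
    and minimal: "\<And>t v. v \<in> V \<Longrightarrow> hnorm ip (\<lambda>s. x s - p s) \<le> hnorm ip (\<lambda>s. (x s - p s) - t * v s)"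
    using best_approximation_limit[OF V add scale nonempty x] by blast
  have "ip (\<lambda>s. x s - p s) v = 0" if v: "v \<in> V" for v
    using orthogonal_if_minimal_distance[OF diff_mem[OF x p] _ minimal[OF v]] v V by blast
  then have "(\<lambda>s. x s - p s) = (\<lambda>_. 0)"
    using orth[OF diff_mem[OF x p]] by blast
  then have "p = x" by (simp add: fun_eq_iff)
  then show ?thesis using that X Xp by blast
qed

lemma cspan_subset: "S \<subseteq> H \<Longrightarrow> cspan S \<subseteq> H"
  unfolding cspan_def using sum_mem[of _ "\<lambda>h. h"] by blast

lemma total_orthogonal_eq_0:
  assumes total: "total_in H ip S" and y: "y \<in> H" and orth: "\<And>f. f \<in> S \<Longrightarrow> ip f y = 0"
  shows "y = (\<lambda>_. 0)"
proof -
  have S: "S \<subseteq> H" using total unfolding total_in_def by blast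
  have "hnorm ip y \<le> e" if e: "e > 0" for e
  proof -
    obtain g where g: "g \<in> cspan S" and close: "hnorm ip (\<lambda>s. y s - g s) < e"
      using total y e unfolding total_in_def by blast
    obtain F c where F: "finite F" "F \<subseteq> S" and g_eq: "g = (\<lambda>s. \<Sum>h\<in>F. c h * h s)"
      using g unfolding cspan_def by blast
    have gH: "g \<in> H" using g cspan_subset[OF S] by blast
    have "ip g y = (\<Sum>h\<in>F. c h * ip h y)"
      unfolding g_eq using ip_sum_left[OF F(1), of "\<lambda>h. h" y c] F(2) S y by blast
    also have "\<dots> = 0"
      using F(2) orth by (auto intro!: sum.neutral)
    finally have "ip g y = 0" .
    then have "(hnorm ip y)^2 = Re (ip (\<lambda>s. y s - g s) y)"
      using hnorm_sq[OF y] ip_diff_left[OF y gH y] by simp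
    also have "\<dots> \<le> hnorm ip (\<lambda>s. y s - g s) * hnorm ip y"
      using cauchy_schwarz[OF diff_mem[OF y gH] y] complex_Re_le_cmod order_trans by blast
    also have "\<dots> \<le> e * hnorm ip y"
      using close hnorm_nonneg[OF y] by (simp add: mult_right_mono)
    finally have "hnorm ip y * hnorm ip y \<le> e * hnorm ip y"
      by (simp add: power2_eq_square)
    then show ?thesis
      using e hnorm_nonneg[OF y] mult_right_le_imp_le[of "hnorm ip y" "hnorm ip y" e]
      by (cases "hnorm ip y = 0") auto
  qed
  then have "hnorm ip y = 0"
    using hnorm_nonneg[OF y] by (meson dense_ge antisym)
  then show ?thesis using hnorm_eq_0_iff[OF y] by simp
qed

end

section \<open>Reproducing kernel Hilbert spaces on a half-plane\<close>

definition vshift :: "real \<Rightarrow> (complex \<Rightarrow> complex) \<Rightarrow> complex \<Rightarrow> complex" where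
  "vshift c f = (\<lambda>s. f (s - \<i> * of_real c))"

lemma vshift_sum: "vshift c (\<lambda>s. \<Sum>t\<in>B. d t * f t s) = (\<lambda>s. \<Sum>t\<in>B. d t * vshift c (f t) s)"
  by (simp add: vshift_def)

lemma vshift_vshift_neg: "vshift (- c) (vshift c f) = f"
  by (simp add: vshift_def)

lemma halfplane_add_imaginary: "s + \<i> * of_real c \<in> halfplane \<rho> \<longleftrightarrow> s \<in> halfplane \<rho>"
  by (simp add: halfplane_def)

lemma halfplane_diff_imaginary: "s - \<i> * of_real c \<in> halfplane \<rho> \<longleftrightarrow> s \<in> halfplane \<rho>"
  by (simp add: halfplane_def)

definition kernel_span :: "(complex \<Rightarrow> complex \<Rightarrow> complex) \<Rightarrow> real \<Rightarrow> (complex \<Rightarrow> complex) set" where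
  "kernel_span K \<rho> = cspan ((\<lambda>t s. K s t) ` halfplane \<rho>)"

locale halfplane_rkhs =
  fixes H :: "(complex \<Rightarrow> complex) set"
    and ip :: "(complex \<Rightarrow> complex) \<Rightarrow> (complex \<Rightarrow> complex) \<Rightarrow> complex"
    and \<rho> :: real and K :: "complex \<Rightarrow> complex \<Rightarrow> complex"
  assumes is_rkhs: "is_rkhs H ip \<rho> K"
begin

sublocale fun_hilbert H ip
  using is_rkhs unfolding is_rkhs_def fun_hilbert_def by blast

lemma vanishes_outside: "f \<in> H \<Longrightarrow> s \<notin> halfplane \<rho> \<Longrightarrow> f s = 0"
  and kernel_mem: "t \<in> halfplane \<rho> \<Longrightarrow> (\<lambda>s. K s t) \<in> H"
  and reproducing: "t \<in> halfplane \<rho> \<Longrightarrow> f \<in> H \<Longrightarrow> ip f (\<lambda>s. K s t) = f t"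
  using is_rkhs unfolding is_rkhs_def by blast+

lemma kernel_span_subset: "kernel_span K \<rho> \<subseteq> H"
  unfolding kernel_span_def using kernel_mem by (intro cspan_subset) blast

lemma kernel_span_dense:
  assumes "x \<in> H"
  obtains X where "\<And>n. X n \<in> kernel_span K \<rho>" "hconverges ip X x"
proof (rule dense_if_orthogonal_complement_trivial[OF kernel_span_subset _ _ _ _ assms])
  show "\<And>v w. v \<in> kernel_span K \<rho> \<Longrightarrow> w \<in> kernel_span K \<rho> \<Longrightarrow> (\<lambda>s. v s + w s) \<in> kernel_span K \<rho>"
    and "\<And>c v. v \<in> kernel_span K \<rho> \<Longrightarrow> (\<lambda>s. c * v s) \<in> kernel_span K \<rho>"
    and "kernel_span K \<rho> \<noteq> {}"
    unfolding kernel_span_def using cspan_add cspan_scale cspan_zero by blast+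
next
  fix y
  assume y: "y \<in> H" and orth: "\<And>v. v \<in> kernel_span K \<rho> \<Longrightarrow> ip y v = 0"
  have "y t = 0" for t
  proof (cases "t \<in> halfplane \<rho>")
    case True
    then have "(\<lambda>s. K s t) \<in> kernel_span K \<rho>"
      unfolding kernel_span_def by (intro cspan_superset imageI)
    then show ?thesis using orth reproducing[OF True y] by simp
  qed (use vanishes_outside y in auto)
  then show "y = (\<lambda>_. 0)" by auto
qed blast

lemma hconverges_pointwise:
  assumes X: "\<And>n. X n \<in> H" and x: "x \<in> H" and "hconverges ip X x"
  shows "(\<lambda>n. X n s) \<longlonglongrightarrow> x s"
proof (cases "s \<in> halfplane \<rho>")
  case True
  have "(\<lambda>n. ip (X n) (\<lambda>z. K z s)) \<longlonglongrightarrow> ip x (\<lambda>z. K z s)"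
    using kernel_mem[OF True] by (intro hconverges_ip[OF X _ x] hconverges_const assms(3))
  then show ?thesis using reproducing[OF True] X x by simp
next
  case False
  then show ?thesis using vanishes_outside[OF X False] vanishes_outside[OF x False] by simp
qed

end

locale vshift_invariant_rkhs = halfplane_rkhs +
  assumes kernel_vshift: "K (s - \<i> * of_real c) t = K s (t + \<i> * of_real c)"
begin

lemma vshift_kernel_span_sum:
  "vshift c (\<lambda>s. \<Sum>t\<in>B. d t * K s t) = (\<lambda>s. \<Sum>t\<in>B. d t * K s (t + \<i> * of_real c))"
  by (simp add: vshift_def kernel_vshift)

lemma vshift_kernel_span:
  assumes "v \<in> kernel_span K \<rho>"
  shows "vshift c v \<in> kernel_span K \<rho>"
proof -
  obtain B d where B: "finite B" "B \<subseteq> halfplane \<rho>" and v: "v = (\<lambda>s. \<Sum>t\<in>B. d t * K s t)"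
    using assms unfolding kernel_span_def by (blast elim: cspan_imageE)
  have "(\<lambda>s. K s (t + \<i> * of_real c)) \<in> (\<lambda>t s. K s t) ` halfplane \<rho>" if "t \<in> B" for t
    using B(2) that halfplane_add_imaginary by blast
  then show ?thesis
    unfolding v vshift_kernel_span_sum kernel_span_def by (rule cspan_sum_mem[OF B(1)])
qed

lemma ip_vshift_kernel_span:
  assumes x: "x \<in> H" and x': "vshift c x \<in> H" and w: "w \<in> kernel_span K \<rho>"
  shows "ip (vshift c x) (vshift c w) = ip x w"
proof -
  obtain B d where B: "finite B" "B \<subseteq> halfplane \<rho>" and w_eq: "w = (\<lambda>s. \<Sum>t\<in>B. d t * K s t)"
    using w unfolding kernel_span_def by (blast elim: cspan_imageE)
  have shifted: "t + \<i> * of_real c \<in> halfplane \<rho>" if "t \<in> B" for t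
    using B(2) that halfplane_add_imaginary by blast
  have "ip (vshift c x) (vshift c w) = (\<Sum>t\<in>B. cnj (d t) * ip (vshift c x) (\<lambda>s. K s (t + \<i> * of_real c)))"
    unfolding w_eq vshift_kernel_span_sum using kernel_mem[OF shifted] x'
    by (intro ip_sum_right[OF B(1)]) auto
  also have "\<dots> = (\<Sum>t\<in>B. cnj (d t) * ip x (\<lambda>s. K s t))"
    using reproducing[OF shifted x'] reproducing[OF _ x] B(2) by (intro sum.cong) (auto simp: vshift_def)
  also have "\<dots> = ip x w"
    unfolding w_eq using kernel_mem B(2) x by (intro ip_sum_right[OF B(1), symmetric]) auto
  finally show ?thesis .
qed

lemma vshift_hconverges:
  assumes x: "x \<in> H" and X: "\<And>n. X n \<in> kernel_span K \<rho>" and Xx: "hconverges ip X x"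
  shows "vshift c x \<in> H" "hconverges ip (\<lambda>n. vshift c (X n)) (vshift c x)"
proof -
  have XH: "X n \<in> H" for n using X kernel_span_subset by blast
  have YH: "vshift c (X n) \<in> H" for n using vshift_kernel_span[OF X] kernel_span_subset by blast
  have isometric: "hnorm ip (\<lambda>s. vshift c (X m) s - vshift c (X n) s) = hnorm ip (\<lambda>s. X m s - X n s)" for m n
  proof -
    have diff: "(\<lambda>s. X m s - X n s) \<in> kernel_span K \<rho>"
      using cspan_add[OF _ cspan_scale, of "X m" _ "X n" "-1"] X unfolding kernel_span_def by simp
    have "vshift c (\<lambda>s. X m s - X n s) = (\<lambda>s. vshift c (X m) s - vshift c (X n) s)"
      by (simp add: vshift_def)
    then show ?thesis
      using ip_vshift_kernel_span[OF _ _ diff] diff kernel_span_subset vshift_kernel_span[OF diff]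
      unfolding hnorm_def by (metis subsetD)
  qed
  have "\<forall>e>0. \<exists>N. \<forall>m\<ge>N. \<forall>n\<ge>N. hnorm ip (\<lambda>s. vshift c (X m) s - vshift c (X n) s) < e"
    using hconverges_Cauchy[OF XH x Xx] unfolding isometric .
  then obtain L where L: "L \<in> H" and YL: "hconverges ip (\<lambda>n. vshift c (X n)) L"
    using complete[of "\<lambda>n. vshift c (X n)", OF YH] by blast
  have "L s = vshift c x s" for s
  proof -
    have "(\<lambda>n. vshift c (X n) s) \<longlonglongrightarrow> L s"
      by (rule hconverges_pointwise[OF YH L YL])
    moreover have "(\<lambda>n. vshift c (X n) s) \<longlonglongrightarrow> vshift c x s"
      unfolding vshift_def by (rule hconverges_pointwise[OF XH x Xx])
    ultimately show ?thesis by (rule LIMSEQ_unique)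
  qed
  then have "L = vshift c x" by auto
  then show "vshift c x \<in> H" "hconverges ip (\<lambda>n. vshift c (X n)) (vshift c x)"
    using L YL by auto
qed

lemma vshift_mem: "x \<in> H \<Longrightarrow> vshift c x \<in> H"
  by (metis kernel_span_dense vshift_hconverges(1))

lemma ip_vshift:
  assumes x: "x \<in> H" and y: "y \<in> H"
  shows "ip (vshift c x) (vshift c y) = ip x y"
proof -
  obtain Y where Y: "\<And>n. Y n \<in> kernel_span K \<rho>" and Yy: "hconverges ip Y y"
    using kernel_span_dense[OF y] by blast
  have YH: "Y n \<in> H" for n using Y kernel_span_subset by blast
  have "(\<lambda>n. ip (vshift c x) (vshift c (Y n))) \<longlonglongrightarrow> ip (vshift c x) (vshift c y)"
    using vshift_hconverges[OF y Y Yy] vshift_mem[OF x] vshift_kernel_span[OF Y] kernel_span_subset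
    by (intro hconverges_ip hconverges_const) auto
  moreover have "(\<lambda>n. ip x (Y n)) \<longlonglongrightarrow> ip x y"
    using x y YH Yy by (intro hconverges_ip hconverges_const) auto
  moreover have "ip (vshift c x) (vshift c (Y n)) = ip x (Y n)" for n
    by (rule ip_vshift_kernel_span[OF x vshift_mem[OF x] Y])
  ultimately show ?thesis
    using LIMSEQ_unique by auto
qed

lemma unitary_vshift: "unitary_on H ip (vshift c)"
  unfolding unitary_on_def linear_on_def
proof (intro conjI ballI allI)
  show "bij_betw (vshift c) H H"
    using vshift_mem vshift_vshift_neg[of c] vshift_vshift_neg[of "- c"]
    by (intro bij_betw_byWitness[where f'="vshift (- c)"]) auto
next
  fix x y
  assume "x \<in> H" "y \<in> H"
  then show "ip (vshift c x) (vshift c y) = ip x y" by (rule ip_vshift)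
qed (simp_all add: vshift_def)

end

lemma T_homogeneous_if_vshift_eigenfamily:
  assumes unitary: "\<And>c. unitary_on H ip (vshift c)"
    and shift: "\<And>c \<beta>. vshift c (f \<beta>) = f (\<beta> + c)"
    and T_lin: "linear_on (cspan (range f)) T"
    and T_f: "\<And>\<beta>. T (f \<beta>) = (\<lambda>s. \<i> * of_real \<beta> * f \<beta> s)"
  shows "T_homogeneous H ip (cspan (range f)) T"
proof -
  have T_sum: "T (\<lambda>s. \<Sum>\<beta>\<in>B. d \<beta> * f (\<phi> \<beta>) s) = (\<lambda>s. \<Sum>\<beta>\<in>B. d \<beta> * (\<i> * of_real (\<phi> \<beta>)) * f (\<phi> \<beta>) s)"
    if "finite B" for B d \<phi>
    using linear_on_cspan_sum[OF T_lin that, of "\<lambda>\<beta>. f (\<phi> \<beta>)" d] by (simp add: T_f mult.assoc)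
  have shifted_sum: "vshift c (\<lambda>s. \<Sum>\<beta>\<in>B. d \<beta> * f \<beta> s) = (\<lambda>s. \<Sum>\<beta>\<in>B. d \<beta> * f (\<beta> + c) s)" for c B d
    by (simp add: vshift_sum shift)
  have invariant: "vshift c ` cspan (range f) \<subseteq> cspan (range f)" for c
  proof
    fix g
    assume "g \<in> vshift c ` cspan (range f)"
    then obtain h where "h \<in> cspan (range f)" and g: "g = vshift c h"
      by blast
    then obtain B d where "finite B" and "h = (\<lambda>s. \<Sum>\<beta>\<in>B. d \<beta> * f \<beta> s)"
      by (blast elim: cspan_imageE)
    then show "g \<in> cspan (range f)"
      unfolding g by (simp add: shifted_sum cspan_sum_mem)
  qed
  have commute: "vshift c (T g) = (\<lambda>s. T (vshift c g) s - \<i> * of_real c * vshift c g s)"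
    if "g \<in> cspan (range f)" for c g
  proof
    fix s
    obtain B d where B: "finite B" and g: "g = (\<lambda>s. \<Sum>\<beta>\<in>B. d \<beta> * f \<beta> s)"
      using \<open>g \<in> cspan (range f)\<close> by (blast elim: cspan_imageE)
    have "T (vshift c g) s - \<i> * of_real c * vshift c g s
        = (\<Sum>\<beta>\<in>B. d \<beta> * (\<i> * of_real (\<beta> + c)) * f (\<beta> + c) s - \<i> * of_real c * (d \<beta> * f (\<beta> + c) s))"
      unfolding g shifted_sum T_sum[OF B] by (simp add: sum_subtractf sum_distrib_left)
    also have "\<dots> = (\<Sum>\<beta>\<in>B. d \<beta> * (\<i> * of_real \<beta>) * f (\<beta> + c) s)"
      by (intro sum.cong) (simp_all add: algebra_simps)
    also have "\<dots> = vshift c (T g) s"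
      unfolding g T_sum[OF B, of d "\<lambda>\<beta>. \<beta>"] using shift by (simp add: vshift_def fun_eq_iff)
    finally show "vshift c (T g) s = T (vshift c g) s - \<i> * of_real c * vshift c g s" ..
  qed
  show ?thesis
    unfolding T_homogeneous_def using unitary invariant commute by blast
qed

section \<open>Absolutely convergent trigonometric series\<close>

lemma norm_exp_ii_mult: "norm (exp (\<i> * of_real x * of_real y)) = 1"
  using norm_exp_i_times[of "x * y"] by (simp add: mult.assoc)

lemma exp_ii_mult_integral_bound:
  fixes \<mu> T :: real
  assumes "\<mu> \<noteq> 0" "T \<ge> 0"
  obtains I where "((\<lambda>\<beta>. exp (\<i> * of_real \<beta> * of_real \<mu>)) has_integral I) {T..2*T}" "norm I \<le> 2 / \<bar>\<mu>\<bar>"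
proof -
  define F where "F z = exp (\<i> * z * of_real \<mu>) / (\<i> * of_real \<mu>)" for z :: complex
  have "(F has_field_derivative exp (\<i> * z * of_real \<mu>)) (at z)" for z
    unfolding F_def using assms(1) by (auto intro!: derivative_eq_intros)
  then have "((\<lambda>\<beta>. exp (\<i> * of_real \<beta> * of_real \<mu>)) has_integral (F (of_real (2*T)) - F (of_real T))) {T..2*T}"
    using assms(2) by (intro fundamental_theorem_of_calculus has_vector_derivative_real_field) auto
  moreover have norm_F: "norm (F (of_real x)) = 1 / \<bar>\<mu>\<bar>" for x :: real
    using norm_exp_ii_mult[of x \<mu>] by (simp add: F_def norm_divide norm_mult)
  then have "norm (F (of_real (2*T)) - F (of_real T)) \<le> 2 / \<bar>\<mu>\<bar>"
    using norm_triangle_ineq4[of "F (of_real (2*T))" "F (of_real T)"] norm_F[of "2*T"] norm_F[of T]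
    by linarith
  ultimately show ?thesis using that by blast
qed

lemma trig_poly_mean_bound:
  fixes c :: "nat \<Rightarrow> complex" and \<omega> :: "nat \<Rightarrow> real"
  assumes F: "finite F" "m \<in> F" and inj: "inj \<omega>" and T: "T \<ge> 0"
  obtains I where
    "((\<lambda>\<beta>. \<Sum>n\<in>F. c n * exp (\<i> * of_real \<beta> * of_real (\<omega> n - \<omega> m))) has_integral I) {T..2*T}"
    "norm (I - of_real T * c m) \<le> (\<Sum>n\<in>F - {m}. norm (c n) * (2 / \<bar>\<omega> n - \<omega> m\<bar>))"
proof -
  have "\<exists>J. ((\<lambda>\<beta>. exp (\<i> * of_real \<beta> * of_real (\<omega> n - \<omega> m))) has_integral J) {T..2*T}
      \<and> (n = m \<longrightarrow> J = of_real T) \<and> (n \<noteq> m \<longrightarrow> norm J \<le> 2 / \<bar>\<omega> n - \<omega> m\<bar>)" for n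
  proof (cases "n = m")
    case True
    have "((\<lambda>\<beta>. 1::complex) has_integral of_real T) {T..2*T}"
      using has_integral_const_real[of "1::complex" T "2*T"] T by (simp add: scaleR_conv_of_real)
    with True show ?thesis by auto
  next
    case False
    then have "\<omega> n - \<omega> m \<noteq> 0" using inj by (simp add: inj_eq)
    with False show ?thesis using T by (metis exp_ii_mult_integral_bound)
  qed
  then obtain J where J: "\<And>n. ((\<lambda>\<beta>. exp (\<i> * of_real \<beta> * of_real (\<omega> n - \<omega> m))) has_integral J n) {T..2*T}"
    and Jm: "J m = of_real T" and Jn: "\<And>n. n \<noteq> m \<Longrightarrow> norm (J n) \<le> 2 / \<bar>\<omega> n - \<omega> m\<bar>"
    by metis
  have integral: "((\<lambda>\<beta>. \<Sum>n\<in>F. c n * exp (\<i> * of_real \<beta> * of_real (\<omega> n - \<omega> m))) has_integral (\<Sum>n\<in>F. c n * J n)) {T..2*T}"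
    using J by (intro has_integral_sum[OF F(1)] has_integral_mult_right)
  have remove_m: "(\<Sum>n\<in>F. c n * J n) - of_real T * c m = (\<Sum>n\<in>F - {m}. c n * J n)"
    using F Jm by (simp add: sum.remove mult.commute)
  have "norm (\<Sum>n\<in>F - {m}. c n * J n) \<le> (\<Sum>n\<in>F - {m}. norm (c n) * (2 / \<bar>\<omega> n - \<omega> m\<bar>))"
  proof (rule order_trans[OF norm_sum sum_mono])
    fix n
    assume "n \<in> F - {m}"
    then show "norm (c n * J n) \<le> norm (c n) * (2 / \<bar>\<omega> n - \<omega> m\<bar>)"
      unfolding norm_mult using Jn by (intro mult_left_mono) auto
  qed
  then show ?thesis
    using that[OF integral] unfolding remove_m by blast
qed

lemma trig_series_truncation_bound:
  fixes c :: "nat \<Rightarrow> complex" and \<omega> :: "nat \<Rightarrow> real"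
  assumes summable: "summable (\<lambda>n. norm (c n))"
  shows "norm (\<Sum>n<N. c n * exp (\<i> * of_real \<beta> * of_real (\<omega> n - \<omega> m)))
    \<le> norm (\<Sum>n. c n * exp (\<i> * of_real \<beta> * of_real (\<omega> n))) + (\<Sum>i. norm (c (i + N)))"
proof -
  define f where "f n = c n * exp (\<i> * of_real \<beta> * of_real (\<omega> n))" for n
  have norm_f: "norm (f n) = norm (c n)" for n
    by (simp add: f_def norm_mult norm_exp_ii_mult)
  then have f: "summable (\<lambda>n. norm (f n))" using summable by simp
  have "exp (\<i> * of_real \<beta> * of_real (\<omega> n - \<omega> m)) * exp (\<i> * of_real \<beta> * of_real (\<omega> m))
      = exp (\<i> * of_real \<beta> * of_real (\<omega> n))" for n
    by (simp add: exp_add[symmetric] algebra_simps)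
  then have "(\<Sum>n<N. c n * exp (\<i> * of_real \<beta> * of_real (\<omega> n - \<omega> m))) * exp (\<i> * of_real \<beta> * of_real (\<omega> m))
      = (\<Sum>n<N. f n)"
    unfolding f_def sum_distrib_right by (simp add: mult.assoc)
  also have "\<dots> = (\<Sum>n. f n) - (\<Sum>i. f (i + N))"
    using suminf_split_initial_segment[OF summable_norm_cancel[OF f], of N] by simp
  finally have rotated: "(\<Sum>n<N. c n * exp (\<i> * of_real \<beta> * of_real (\<omega> n - \<omega> m)))
      * exp (\<i> * of_real \<beta> * of_real (\<omega> m)) = (\<Sum>n. f n) - (\<Sum>i. f (i + N))" .
  have "norm (\<Sum>n<N. c n * exp (\<i> * of_real \<beta> * of_real (\<omega> n - \<omega> m)))
      = norm ((\<Sum>n<N. c n * exp (\<i> * of_real \<beta> * of_real (\<omega> n - \<omega> m)))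
          * exp (\<i> * of_real \<beta> * of_real (\<omega> m)))"
    unfolding norm_mult norm_exp_ii_mult by simp
  also have "\<dots> = norm ((\<Sum>n. f n) - (\<Sum>i. f (i + N)))"
    unfolding rotated ..
  also have "\<dots> \<le> norm (\<Sum>n. f n) + (\<Sum>i. norm (c (i + N)))"
    using norm_triangle_ineq4[of "\<Sum>n. f n" "\<Sum>i. f (i + N)"]
      summable_norm[OF summable_ignore_initial_segment[OF f, of N]] unfolding norm_f by linarith
  finally show ?thesis unfolding f_def .
qed

text \<open>Bohr's mean value argument: averaging the truncated series times \<open>exp (- \<i> \<beta> \<omega> m)\<close>
  over \<open>[T, 2T]\<close> gives \<open>c m + O(1/T)\<close>.\<close>
lemma trig_series_coeff_bound:
  fixes c :: "nat \<Rightarrow> complex" and \<omega> :: "nat \<Rightarrow> real" and E C :: real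
  assumes summable: "summable (\<lambda>n. norm (c n))" and inj: "inj \<omega>" and E: "E \<ge> 0" and C: "C \<ge> 0"
    and bound: "\<And>\<beta>. \<beta> \<ge> 1 \<Longrightarrow> norm (\<Sum>n. c n * exp (\<i> * of_real \<beta> * of_real (\<omega> n))) \<le> E + C / \<beta>"
  shows "norm (c m) \<le> E"
proof (rule field_le_epsilon)
  fix \<epsilon> :: real
  assume \<epsilon>: "\<epsilon> > 0"
  obtain N0 where N0: "\<And>N. N \<ge> N0 \<Longrightarrow> norm (\<Sum>i. norm (c (i + N))) < \<epsilon> / 2"
    using suminf_exist_split[OF half_gt_zero[OF \<epsilon>] summable] by blast
  define N where "N = max N0 (Suc m)"
  define P where "P \<beta> = (\<Sum>n<N. c n * exp (\<i> * of_real \<beta> * of_real (\<omega> n - \<omega> m)))" for \<beta> :: real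
  define K where "K = (\<Sum>n\<in>{..<N} - {m}. norm (c n) * (2 / \<bar>\<omega> n - \<omega> m\<bar>))"
  have P_bound: "norm (P \<beta>) \<le> E + C / \<beta> + \<epsilon> / 2" if "\<beta> \<ge> 1" for \<beta>
    using trig_series_truncation_bound[OF summable, where N = N and \<beta> = \<beta> and \<omega> = \<omega> and m = m]
      bound[OF that] N0[of N]
    unfolding P_def N_def by simp
  define T where "T = max 1 (2 * (C + K) / \<epsilon>)"
  have T: "T \<ge> 1" "C + K \<le> \<epsilon> / 2 * T"
  proof -
    have "2 * (C + K) / \<epsilon> \<le> T" by (simp add: T_def)
    then show "C + K \<le> \<epsilon> / 2 * T" using \<epsilon> by (simp add: pos_divide_le_eq mult.commute)
  qed (simp add: T_def)
  have "m \<in> {..<N}" "T \<ge> 0" using T(1) by (simp_all add: N_def)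
  then obtain I where I: "(P has_integral I) {T..2*T}" and I_m: "norm (I - of_real T * c m) \<le> K"
    unfolding P_def K_def by (rule trig_poly_mean_bound[OF finite_lessThan _ inj])
  have P_le: "norm (P \<beta>) \<le> E + C / T + \<epsilon> / 2" if "\<beta> \<in> cbox T (2*T)" for \<beta>
  proof -
    have "\<beta> \<ge> T" using that by simp
    then have "C / \<beta> \<le> C / T" using C T(1) by (simp add: frac_le)
    then show ?thesis using P_bound[of \<beta>] \<open>\<beta> \<ge> T\<close> T(1) by simp
  qed
  have "norm I \<le> (E + C / T + \<epsilon> / 2) * T"
    using has_integral_bound[of "E + C / T + \<epsilon> / 2" P I T "2*T", OF _ _ P_le] I E C T(1) \<epsilon> by simp
  also have "\<dots> = (E + \<epsilon> / 2) * T + C"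
    using T(1) by (simp add: field_simps)
  finally have "T * norm (c m) \<le> (E + \<epsilon> / 2) * T + C + K"
    using I_m norm_triangle_ineq3[of "of_real T * c m" I] T(1) by (simp add: norm_mult norm_minus_commute)
  then have "T * norm (c m) \<le> T * (E + \<epsilon>)"
    using T(2) by (simp add: algebra_simps)
  then show "norm (c m) \<le> E + \<epsilon>"
    using T(1) by simp
qed

section \<open>Weighted square-summable sequences\<close>

lemma summable_if_summable_powr_mult:
  fixes x :: "nat \<Rightarrow> real"
  assumes "summable (\<lambda>n. real (Suc n) powr r * x n)" "r \<ge> 0" "\<And>n. x n \<ge> 0"
  shows "summable x"
proof (rule summable_comparison_test[OF _ assms(1)])
  have "x n \<le> real (Suc n) powr r * x n" for n
    using mult_right_mono[OF ge_one_powr_ge_zero[of "real (Suc n)" r] assms(3)[of n]] assms(2) by simp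
  then show "\<exists>N. \<forall>n\<ge>N. norm (x n) \<le> real (Suc n) powr r * x n"
    using assms(3) by auto
qed

lemma abs_mult_le_weighted_sq:
  fixes A b x l :: real
  assumes A: "A \<ge> 0" and b: "A = 0 \<Longrightarrow> b = 0" and l: "l > 0"
  shows "\<bar>b * x\<bar> \<le> l / 2 * (b^2 / A) + A * x^2 / (2 * l)"
proof (cases "A = 0")
  case False
  with A have A: "A > 0" by simp
  have "0 \<le> (l * \<bar>b\<bar> - A * \<bar>x\<bar>)^2" by simp
  then have "2 * l * A * \<bar>b * x\<bar> \<le> l^2 * b^2 + A^2 * x^2"
    by (simp add: power2_eq_square algebra_simps abs_mult)
  then show ?thesis
    using A l by (simp add: field_simps power2_eq_square)
qed (use b in simp)

lemma suminf_tendsto_0_if_uniform_tail: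
  fixes e :: "nat \<Rightarrow> nat \<Rightarrow> real"
  assumes nonneg: "\<And>k n. e k n \<ge> 0" and summable: "\<And>k. summable (e k)"
    and pointwise: "\<And>n. (\<lambda>k. e k n) \<longlonglongrightarrow> 0"
    and tail: "\<And>\<epsilon>. \<epsilon> > 0 \<Longrightarrow> \<exists>N. \<forall>k. (\<Sum>i. e k (i + N)) \<le> \<epsilon>"
  shows "(\<lambda>k. \<Sum>n. e k n) \<longlonglongrightarrow> 0"
proof (rule order_tendstoI)
  fix \<epsilon> :: real
  assume \<epsilon>: "\<epsilon> > 0"
  obtain N where N: "\<And>k. (\<Sum>i. e k (i + N)) \<le> \<epsilon> / 2"
    using tail[of "\<epsilon> / 2"] \<epsilon> by auto
  have "(\<lambda>k. \<Sum>n<N. e k n) \<longlonglongrightarrow> (\<Sum>n<N. 0)"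
    using pointwise by (intro tendsto_sum)
  then have "\<forall>\<^sub>F k in sequentially. (\<Sum>n<N. e k n) < \<epsilon> / 2"
    using \<epsilon> by (intro order_tendstoD(2)) auto
  then show "\<forall>\<^sub>F k in sequentially. (\<Sum>n. e k n) < \<epsilon>"
  proof (rule eventually_mono)
    fix k
    assume "(\<Sum>n<N. e k n) < \<epsilon> / 2"
    then show "(\<Sum>n. e k n) < \<epsilon>"
      using suminf_split_initial_segment[OF summable, of k N] N[of k] by simp
  qed
next
  fix \<epsilon> :: real
  assume "\<epsilon> < 0"
  then show "\<forall>\<^sub>F k in sequentially. \<epsilon> < (\<Sum>n. e k n)"
    using suminf_nonneg[OF summable nonneg] by (simp add: less_le_trans)
qed

lemma weighted_tail_bound:
  fixes b A :: "nat \<Rightarrow> real" and w :: "nat \<Rightarrow> complex"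
  assumes b: "summable (\<lambda>n. b n ^ 2 / A n)" and A: "\<And>n. A n \<ge> 0" and b0: "\<And>n. A n = 0 \<Longrightarrow> b n = 0"
    and w: "summable (\<lambda>n. A n * (cmod (w n))^2)" and l: "l > 0"
  shows "summable (\<lambda>n. \<bar>b n\<bar> * cmod (w n))"
    and "(\<Sum>i. \<bar>b (i + N)\<bar> * cmod (w (i + N)))
      \<le> l / 2 * (\<Sum>i. b (i + N) ^ 2 / A (i + N)) + (\<Sum>n. A n * (cmod (w n))^2) / (2 * l)"
proof -
  define Q where "Q = (\<lambda>n. A n * (cmod (w n))^2)"
  have le: "\<bar>b n\<bar> * cmod (w n) \<le> l' / 2 * (b n ^ 2 / A n) + Q n / (2 * l')" if "l' > 0" for n l'
    using abs_mult_le_weighted_sq[OF A[of n] b0[of n] that, of "cmod (w n)"] by (simp add: Q_def abs_mult)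
  have Q: "summable Q" using w by (simp add: Q_def)
  have B_tail: "summable (\<lambda>i. b (i + N) ^ 2 / A (i + N))"
    using summable_ignore_initial_segment[OF b] .
  have Q_tail: "summable (\<lambda>i. Q (i + N))"
    using summable_ignore_initial_segment[OF Q] .
  show e: "summable (\<lambda>n. \<bar>b n\<bar> * cmod (w n))"
  proof (rule summable_comparison_test)
    show "\<exists>N. \<forall>n\<ge>N. norm (\<bar>b n\<bar> * cmod (w n)) \<le> 1 / 2 * (b n ^ 2 / A n) + Q n / (2 * 1)"
      using le[of 1] by simp
    show "summable (\<lambda>n. 1 / 2 * (b n ^ 2 / A n) + Q n / (2 * 1))"
      using b Q by (intro summable_add summable_mult summable_divide)
  qed
  have "summable (\<lambda>i. l / 2 * (b (i + N) ^ 2 / A (i + N)) + Q (i + N) / (2 * l))"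
    using B_tail Q_tail by (intro summable_add summable_mult summable_divide)
  then have "(\<Sum>i. \<bar>b (i + N)\<bar> * cmod (w (i + N)))
      \<le> (\<Sum>i. l / 2 * (b (i + N) ^ 2 / A (i + N)) + Q (i + N) / (2 * l))"
    using le[OF l] summable_ignore_initial_segment[OF e] by (intro suminf_le) auto
  also have "\<dots> = (\<Sum>i. l / 2 * (b (i + N) ^ 2 / A (i + N))) + (\<Sum>i. Q (i + N) / (2 * l))"
    using B_tail Q_tail by (intro suminf_add[symmetric] summable_mult summable_divide)
  also have "\<dots> = l / 2 * (\<Sum>i. b (i + N) ^ 2 / A (i + N)) + (\<Sum>i. Q (i + N)) / (2 * l)"
    by (simp only: suminf_mult[OF B_tail] suminf_divide[OF Q_tail])
  also have "(\<Sum>i. Q (i + N)) \<le> (\<Sum>n. Q n)"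
    using suminf_split_initial_segment[OF Q, of N] sum_nonneg[of "{..<N}" Q] A by (simp add: Q_def)
  finally show "(\<Sum>i. \<bar>b (i + N)\<bar> * cmod (w (i + N)))
      \<le> l / 2 * (\<Sum>i. b (i + N) ^ 2 / A (i + N)) + (\<Sum>n. A n * (cmod (w n))^2) / (2 * l)"
    using l by (simp add: Q_def divide_right_mono)
qed

lemma weighted_series_tendsto_0:
  fixes b A :: "nat \<Rightarrow> real" and w :: "nat \<Rightarrow> nat \<Rightarrow> complex" and u :: "nat \<Rightarrow> complex"
  assumes b: "summable (\<lambda>n. b n ^ 2 / A n)" and A: "\<And>n. A n \<ge> 0" and b0: "\<And>n. A n = 0 \<Longrightarrow> b n = 0"
    and w: "\<And>k. summable (\<lambda>n. A n * (cmod (w k n))^2)" and M: "\<And>k. (\<Sum>n. A n * (cmod (w k n))^2) \<le> M"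
    and pointwise: "\<And>n. (\<lambda>k. of_real (b n) * w k n) \<longlonglongrightarrow> 0"
    and u: "\<And>n. norm (u n) \<le> 1"
  shows "(\<lambda>k. \<Sum>n. of_real (b n) * w k n * u n) \<longlonglongrightarrow> 0"
proof -
  define e where "e = (\<lambda>k n. \<bar>b n\<bar> * cmod (w k n))"
  have e: "summable (e k)" for k
    using weighted_tail_bound(1)[OF b A b0 w zero_less_one] by (simp add: e_def)
  have lim: "(\<lambda>k. \<Sum>n. e k n) \<longlonglongrightarrow> 0"
  proof (rule suminf_tendsto_0_if_uniform_tail)
    show "(\<lambda>k. e k n) \<longlonglongrightarrow> 0" for n
      using tendsto_norm[OF pointwise[of n]] by (simp add: e_def norm_mult)
    show "summable (e k)" for k by (rule e)
    show "e k n \<ge> 0" for k n by (simp add: e_def)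
    fix \<epsilon> :: real
    assume \<epsilon>: "\<epsilon> > 0"
    define l where "l = (\<bar>M\<bar> + 1) / \<epsilon>"
    have l: "l > 0" and "M \<le> l * \<epsilon>"
      using \<epsilon> by (simp_all add: l_def)
    then have M_l: "M / (2 * l) \<le> \<epsilon> / 2"
      by (simp add: pos_divide_le_eq mult.commute)
    obtain N where "norm (\<Sum>i. b (i + N) ^ 2 / A (i + N)) < \<epsilon> / l"
      using suminf_exist_split[OF divide_pos_pos[OF \<epsilon> l] b] by blast
    then have "(\<Sum>i. b (i + N) ^ 2 / A (i + N)) * l < \<epsilon>"
      using l by (simp add: pos_less_divide_eq abs_less_iff)
    then have B_tail: "l / 2 * (\<Sum>i. b (i + N) ^ 2 / A (i + N)) \<le> \<epsilon> / 2"
      by (simp add: mult.commute)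
    have Q_sum: "(\<Sum>n. A n * (cmod (w k n))^2) / (2 * l) \<le> \<epsilon> / 2" for k
      using divide_right_mono[OF M[of k], of "2 * l"] M_l l by simp
    have "(\<Sum>i. e k (i + N)) \<le> \<epsilon>" for k
      using weighted_tail_bound(2)[where w = "w k" and N = N, OF b A b0 w l] B_tail Q_sum[of k]
      unfolding e_def by linarith
    then show "\<exists>N. \<forall>k. (\<Sum>i. e k (i + N)) \<le> \<epsilon>" by blast
  qed
  have le_sum: "norm (\<Sum>n. of_real (b n) * w k n * u n) \<le> (\<Sum>n. e k n)" for k
  proof -
    have le: "norm (of_real (b n) * w k n * u n) \<le> e k n" for n
      using u[of n] by (simp add: e_def norm_mult mult_left_le)
    have summable_norm_terms: "summable (\<lambda>n. norm (of_real (b n) * w k n * u n))"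
      by (rule summable_comparison_test'[OF e[of k]]) (simp add: le)
    have "norm (\<Sum>n. of_real (b n) * w k n * u n) \<le> (\<Sum>n. norm (of_real (b n) * w k n * u n))"
      by (rule summable_norm[OF summable_norm_terms])
    also have "\<dots> \<le> (\<Sum>n. e k n)"
      by (rule suminf_le[OF le summable_norm_terms e])
    finally show ?thesis .
  qed
  show ?thesis
    by (rule Lim_null_comparison[OF _ lim]) (simp add: le_sum)
qed

section \<open>The diagonal Dirichlet series kernel\<close>

lemma dkernel_vshift: "dkernel a \<rho> (s - \<i> * of_real c) t = dkernel a \<rho> s (t + \<i> * of_real c)"
proof -
  have "- (s - \<i> * of_real c) - cnj t = - s - cnj (t + \<i> * of_real c)"
    by (simp add: complex_eq_iff)
  then show ?thesis
    unfolding dkernel_def halfplane_diff_imaginary by (simp only:)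
qed

lemma vshift_fbeta: "vshift c (fbeta b \<rho> \<beta>) = fbeta b \<rho> (\<beta> + c)"
proof
  fix s
  have "- (s - \<i> * of_real c) = - s + \<i> * of_real c" "\<i> * of_real (\<beta> + c) = \<i> * of_real \<beta> + \<i> * of_real c"
    by (simp_all add: distrib_left)
  then have "of_nat (Suc n) powr (\<i> * of_real \<beta>) * of_real (b (Suc n)) * of_nat (Suc n) powr (- (s - \<i> * of_real c))
      = of_nat (Suc n) powr (\<i> * of_real (\<beta> + c)) * of_real (b (Suc n)) * of_nat (Suc n) powr (- s)" for n
    by (simp only: powr_add mult_ac)
  then show "vshift c (fbeta b \<rho> \<beta>) s = fbeta b \<rho> (\<beta> + c) s"
    unfolding vshift_def fbeta_def halfplane_diff_imaginary by (simp only:)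
qed

lemma norm_Suc_powr: "norm (of_nat (Suc n) powr z) = real (Suc n) powr Re z"
  using norm_powr_real_powr[of "of_nat (Suc n)" z] by simp

lemma Suc_powr_ii_mult: "(of_nat (Suc n) :: complex) powr (\<i> * of_real \<beta>) = exp (\<i> * of_real \<beta> * of_real (ln (real (Suc n))))"
  using Ln_of_nat[of "Suc n"] unfolding powr_def by (simp del: of_nat_Suc)

text \<open>The kernel combination \<open>\<Sum>t\<in>B. d t * \<kappa>(s, t)\<close> is the Dirichlet series with coefficients
  \<open>a (Suc n) * cnj (kernel_coeff B d n)\<close> (lemma \<open>kernel_sum_eq\<close>); index \<open>n\<close> stands for the integer \<open>n + 1\<close>.\<close>
definition kernel_coeff :: "complex set \<Rightarrow> (complex \<Rightarrow> complex) \<Rightarrow> nat \<Rightarrow> complex" where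
  "kernel_coeff B d n = (\<Sum>t\<in>B. cnj (d t) * of_nat (Suc n) powr (- t))"

locale dirichlet_rkhs = halfplane_rkhs H ip \<rho> "dkernel a \<rho>"
  for H :: "(complex \<Rightarrow> complex) set"
    and ip :: "(complex \<Rightarrow> complex) \<Rightarrow> (complex \<Rightarrow> complex) \<Rightarrow> complex"
    and \<rho> :: real and a :: "nat \<Rightarrow> real" +
  assumes a_nonneg: "a (Suc n) \<ge> 0"
    and kernel_conv: "x > 2 * \<rho> \<Longrightarrow> summable (\<lambda>n. a (Suc n) * real (Suc n) powr (- x))"
begin

sublocale vshift_invariant_rkhs H ip \<rho> "dkernel a \<rho>"
  by unfold_locales (rule dkernel_vshift)

lemma summable_dkernel:
  assumes "s \<in> halfplane \<rho>" "t \<in> halfplane \<rho>"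
  shows "summable (\<lambda>n. of_real (a (Suc n)) * of_nat (Suc n) powr (- s - cnj t))"
proof (rule summable_norm_cancel)
  have "norm (of_real (a (Suc n)) * of_nat (Suc n) powr (- s - cnj t)) = a (Suc n) * real (Suc n) powr (- (Re s + Re t))" for n
    using a_nonneg[of n] by (simp add: norm_mult norm_Suc_powr del: of_nat_Suc)
  moreover have "summable (\<lambda>n. a (Suc n) * real (Suc n) powr (- (Re s + Re t)))"
    using assms by (intro kernel_conv) (simp add: halfplane_def)
  ultimately show "summable (\<lambda>n. norm (of_real (a (Suc n)) * of_nat (Suc n) powr (- s - cnj t)))"
    by simp
qed

lemma kernel_sum_eq:
  assumes B: "finite B" "B \<subseteq> halfplane \<rho>" and s: "s \<in> halfplane \<rho>"
  shows "(\<lambda>n. of_real (a (Suc n)) * of_nat (Suc n) powr (- s) * cnj (kernel_coeff B d n)) sums (\<Sum>t\<in>B. d t * dkernel a \<rho> s t)"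
proof -
  have "(\<lambda>n. d t * (of_real (a (Suc n)) * of_nat (Suc n) powr (- s - cnj t))) sums (d t * dkernel a \<rho> s t)"
    if "t \<in> B" for t
    using summable_dkernel[OF s] B(2) that s
    by (auto simp: dkernel_def intro!: sums_mult summable_sums)
  then have "(\<lambda>n. \<Sum>t\<in>B. d t * (of_real (a (Suc n)) * of_nat (Suc n) powr (- s - cnj t))) sums (\<Sum>t\<in>B. d t * dkernel a \<rho> s t)"
    by (rule sums_sum)
  moreover have "(\<Sum>t\<in>B. d t * (of_real (a (Suc n)) * of_nat (Suc n) powr (- s - cnj t)))
      = of_real (a (Suc n)) * of_nat (Suc n) powr (- s) * cnj (kernel_coeff B d n)" for n
  proof -
    have "(of_nat (Suc n) :: complex) powr (- s - cnj t) = of_nat (Suc n) powr (- s) * of_nat (Suc n) powr (- cnj t)" for t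
      using powr_add[of "of_nat (Suc n) :: complex" "- s" "- cnj t"] by simp
    moreover have "cnj ((of_nat (Suc n) :: complex) powr (- t)) = of_nat (Suc n) powr (- cnj t)" for t
      by (subst cnj_powr) simp_all
    ultimately show ?thesis
      by (simp add: kernel_coeff_def sum_distrib_left mult_ac)
  qed
  ultimately show ?thesis by simp
qed

lemma ip_fbeta_kernel_sum:
  assumes f_conv: "\<And>s. s \<in> halfplane \<rho> \<Longrightarrow> summable (\<lambda>n. of_nat (Suc n) powr (\<i> * of_real \<beta>)
      * of_real (b (Suc n)) * of_nat (Suc n) powr (- s))"
    and f: "fbeta b \<rho> \<beta> \<in> H" and B: "finite B" "B \<subseteq> halfplane \<rho>"
  shows "(\<lambda>n. of_real (b (Suc n)) * kernel_coeff B d n * of_nat (Suc n) powr (\<i> * of_real \<beta>))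
    sums ip (fbeta b \<rho> \<beta>) (\<lambda>s. \<Sum>t\<in>B. d t * dkernel a \<rho> s t)"
proof -
  have "ip (fbeta b \<rho> \<beta>) (\<lambda>s. \<Sum>t\<in>B. d t * dkernel a \<rho> s t) = (\<Sum>t\<in>B. cnj (d t) * fbeta b \<rho> \<beta> t)"
    using B kernel_mem reproducing[OF _ f] by (subst ip_sum_right[OF B(1) _ f]) (auto intro!: sum.cong)
  moreover have "(\<lambda>n. cnj (d t) * (of_nat (Suc n) powr (\<i> * of_real \<beta>) * of_real (b (Suc n))
      * of_nat (Suc n) powr (- t))) sums (cnj (d t) * fbeta b \<rho> \<beta> t)" if "t \<in> B" for t
    using f_conv B(2) that by (auto simp: fbeta_def intro!: sums_mult summable_sums)
  then have "(\<lambda>n. \<Sum>t\<in>B. cnj (d t) * (of_nat (Suc n) powr (\<i> * of_real \<beta>) * of_real (b (Suc n))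
      * of_nat (Suc n) powr (- t))) sums (\<Sum>t\<in>B. cnj (d t) * fbeta b \<rho> \<beta> t)"
    by (rule sums_sum)
  ultimately show ?thesis
    by (simp add: kernel_coeff_def sum_distrib_left sum_distrib_right mult_ac)
qed

lemma hnorm_kernel_sum_sq:
  assumes B: "finite B" "B \<subseteq> halfplane \<rho>"
  shows "(\<lambda>n. a (Suc n) * (cmod (kernel_coeff B d n))^2) sums (hnorm ip (\<lambda>s. \<Sum>t\<in>B. d t * dkernel a \<rho> s t))^2"
proof -
  define v where "v = (\<lambda>s. \<Sum>t\<in>B. d t * dkernel a \<rho> s t)"
  have v: "v \<in> H" unfolding v_def using B kernel_mem by (intro sum_mem) auto
  have "ip v v = (\<Sum>t\<in>B. cnj (d t) * v t)"
    using B kernel_mem reproducing[OF _ v]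
    by (subst (2) v_def, subst ip_sum_right[OF B(1) _ v]) (auto intro!: sum.cong)
  moreover have "(\<lambda>n. \<Sum>t\<in>B. cnj (d t) * (of_real (a (Suc n)) * of_nat (Suc n) powr (- t) * cnj (kernel_coeff B d n)))
      sums (\<Sum>t\<in>B. cnj (d t) * v t)"
    unfolding v_def using B by (intro sums_sum sums_mult kernel_sum_eq) auto
  moreover have "(\<Sum>t\<in>B. cnj (d t) * (of_real (a (Suc n)) * of_nat (Suc n) powr (- t) * cnj (kernel_coeff B d n)))
      = of_real (a (Suc n) * (cmod (kernel_coeff B d n))^2)" for n
  proof -
    have "(\<Sum>t\<in>B. cnj (d t) * (of_real (a (Suc n)) * of_nat (Suc n) powr (- t) * cnj (kernel_coeff B d n)))
        = of_real (a (Suc n)) * (kernel_coeff B d n * cnj (kernel_coeff B d n))"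
      by (simp add: kernel_coeff_def sum_distrib_left sum_distrib_right mult_ac)
    then show ?thesis
      unfolding of_real_mult complex_norm_square .
  qed
  ultimately have "(\<lambda>n. complex_of_real (a (Suc n) * (cmod (kernel_coeff B d n))^2))
      sums complex_of_real ((hnorm ip v)^2)"
    using ip_self_eq_hnorm_sq[OF v] by simp
  then show ?thesis
    unfolding v_def sums_of_real_iff .
qed

lemma kernel_sum_coeff_bound:
  assumes f_conv: "\<And>\<beta> s. s \<in> halfplane \<rho> \<Longrightarrow> summable (\<lambda>n. of_nat (Suc n) powr (\<i> * of_real \<beta>)
      * of_real (b (Suc n)) * of_nat (Suc n) powr (- s))"
    and f: "\<And>\<beta>. fbeta b \<rho> \<beta> \<in> H" and f_norm: "\<And>\<beta>. hnorm ip (fbeta b \<rho> \<beta>) = M"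
    and b_sq: "summable (\<lambda>n. b (Suc n) ^ 2 / a (Suc n))" and b_supp: "\<And>n. a (Suc n) = 0 \<Longrightarrow> b (Suc n) = 0"
    and g: "g \<in> H" and C: "C \<ge> 0" and decay: "\<And>\<beta>. \<beta> \<ge> 1 \<Longrightarrow> cmod (ip (fbeta b \<rho> \<beta>) g) \<le> C / \<beta>"
    and B: "finite B" "B \<subseteq> halfplane \<rho>"
  shows "cmod (of_real (b (Suc n)) * kernel_coeff B d n)
    \<le> M * hnorm ip (\<lambda>s. (\<Sum>t\<in>B. d t * dkernel a \<rho> s t) - g s)"
proof -
  define v where "v = (\<lambda>s. \<Sum>t\<in>B. d t * dkernel a \<rho> s t)"
  define c where "c n = of_real (b (Suc n)) * kernel_coeff B d n" for n
  have v: "v \<in> H" unfolding v_def using B kernel_mem by (intro sum_mem) auto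
  have M: "M \<ge> 0" using f_norm[of 0] hnorm_nonneg[OF f[of 0]] by simp
  have summable_c: "summable (\<lambda>n. norm (c n))"
  proof (rule summable_comparison_test)
    have "norm (norm (c n))
        \<le> 1 / 2 * (b (Suc n) ^ 2 / a (Suc n)) + a (Suc n) * (cmod (kernel_coeff B d n))^2 / (2 * 1)" for n
      using abs_mult_le_weighted_sq[OF a_nonneg[of n] b_supp[of n], of 1 "cmod (kernel_coeff B d n)"]
      by (simp add: c_def norm_mult abs_mult)
    then show "\<exists>N. \<forall>n\<ge>N. norm (norm (c n))
        \<le> 1 / 2 * (b (Suc n) ^ 2 / a (Suc n)) + a (Suc n) * (cmod (kernel_coeff B d n))^2 / (2 * 1)"
      by blast
    show "summable (\<lambda>n. 1 / 2 * (b (Suc n) ^ 2 / a (Suc n)) + a (Suc n) * (cmod (kernel_coeff B d n))^2 / (2 * 1))"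
      using b_sq sums_summable[OF hnorm_kernel_sum_sq[OF B]] by (intro summable_add summable_mult summable_divide)
  qed
  have inj_ln: "inj (\<lambda>n. ln (real (Suc n)))"
    by (rule injI) simp
  have bound: "norm (\<Sum>n. c n * exp (\<i> * of_real \<beta> * of_real (ln (real (Suc n)))))
      \<le> M * hnorm ip (\<lambda>s. v s - g s) + C / \<beta>" if "\<beta> \<ge> 1" for \<beta>
  proof -
    have "(\<Sum>n. c n * exp (\<i> * of_real \<beta> * of_real (ln (real (Suc n))))) = ip (fbeta b \<rho> \<beta>) v"
      using sums_unique[OF ip_fbeta_kernel_sum[OF f_conv f B]] unfolding c_def v_def Suc_powr_ii_mult
      by simp
    also have "\<dots> = ip (fbeta b \<rho> \<beta>) g + ip (fbeta b \<rho> \<beta>) (\<lambda>s. v s - g s)"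
      using ip_diff_right[OF v g f] by simp
    finally have "norm (\<Sum>n. c n * exp (\<i> * of_real \<beta> * of_real (ln (real (Suc n)))))
        = cmod (ip (fbeta b \<rho> \<beta>) g + ip (fbeta b \<rho> \<beta>) (\<lambda>s. v s - g s))"
      by (simp only:)
    moreover have "cmod (ip (fbeta b \<rho> \<beta>) (\<lambda>s. v s - g s)) \<le> M * hnorm ip (\<lambda>s. v s - g s)"
      using cauchy_schwarz[OF f[of \<beta>] diff_mem[OF v g]] f_norm[of \<beta>] by simp
    ultimately show ?thesis
      using decay[OF that]
        norm_triangle_ineq[of "ip (fbeta b \<rho> \<beta>) g" "ip (fbeta b \<rho> \<beta>) (\<lambda>s. v s - g s)"]
      by linarith
  qed
  have "norm (c n) \<le> M * hnorm ip (\<lambda>s. v s - g s)"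
    using M hnorm_nonneg[OF diff_mem[OF v g]]
    by (intro trig_series_coeff_bound[OF summable_c inj_ln _ C bound]) simp_all
  then show ?thesis
    unfolding c_def v_def .
qed

lemma fbeta_orthogonal_if_decay:
  assumes f_conv: "\<And>\<beta> s. s \<in> halfplane \<rho> \<Longrightarrow> summable (\<lambda>n. of_nat (Suc n) powr (\<i> * of_real \<beta>)
      * of_real (b (Suc n)) * of_nat (Suc n) powr (- s))"
    and f: "\<And>\<beta>. fbeta b \<rho> \<beta> \<in> H" and f_norm: "\<And>\<beta>. hnorm ip (fbeta b \<rho> \<beta>) = M"
    and b_sq: "summable (\<lambda>n. b (Suc n) ^ 2 / a (Suc n))" and b_supp: "\<And>n. a (Suc n) = 0 \<Longrightarrow> b (Suc n) = 0"
    and g: "g \<in> H" and C: "C \<ge> 0" and decay: "\<And>\<beta>. \<beta> \<ge> 1 \<Longrightarrow> cmod (ip (fbeta b \<rho> \<beta>) g) \<le> C / \<beta>"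
  shows "ip (fbeta b \<rho> \<beta>) g = 0"
proof -
  obtain X where X: "\<And>k. X k \<in> kernel_span (dkernel a \<rho>) \<rho>" and Xg: "hconverges ip X g"
    using kernel_span_dense[OF g] by blast
  have "\<exists>B d. finite B \<and> B \<subseteq> halfplane \<rho> \<and> X k = (\<lambda>s. \<Sum>t\<in>B. d t * dkernel a \<rho> s t)" for k
  proof -
    obtain B d where "finite B" "B \<subseteq> halfplane \<rho>" "X k = (\<lambda>s. \<Sum>t\<in>B. d t * dkernel a \<rho> s t)"
      using X[of k] unfolding kernel_span_def by (rule cspan_imageE)
    then show ?thesis by blast
  qed
  then obtain B d where B: "\<And>k. finite (B k)" "\<And>k. B k \<subseteq> halfplane \<rho>"
    and X_eq: "\<And>k. X k = (\<lambda>s. \<Sum>t\<in>B k. d k t * dkernel a \<rho> s t)"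
    by metis
  define w where "w k n = kernel_coeff (B k) (d k) n" for k n
  have XH: "X k \<in> H" for k using X kernel_span_subset by blast
  have dist: "(\<lambda>k. hnorm ip (\<lambda>s. X k s - g s)) \<longlonglongrightarrow> 0"
    using Xg unfolding hconverges_def .
  have pointwise: "(\<lambda>k. of_real (b (Suc n)) * w k n) \<longlonglongrightarrow> 0" for n
  proof (rule Lim_null_comparison)
    show "\<forall>\<^sub>F k in sequentially. norm (of_real (b (Suc n)) * w k n) \<le> M * hnorm ip (\<lambda>s. X k s - g s)"
      using kernel_sum_coeff_bound[OF f_conv f f_norm b_sq b_supp g C decay B] by (simp add: w_def X_eq)
    show "(\<lambda>k. M * hnorm ip (\<lambda>s. X k s - g s)) \<longlonglongrightarrow> 0"
      using tendsto_mult_right_zero[OF dist] .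
  qed
  obtain R where R: "\<And>k. hnorm ip (\<lambda>s. X k s - g s) \<le> R"
    using convergent_imp_Bseq[OF convergentI[OF dist]] unfolding Bseq_def by (metis abs_le_D1 real_norm_def)
  have bounded: "(\<Sum>n. a (Suc n) * (cmod (w k n))^2) \<le> (R + hnorm ip g)^2" for k
  proof -
    have "(\<Sum>n. a (Suc n) * (cmod (w k n))^2) = (hnorm ip (X k))^2"
      using sums_unique[OF hnorm_kernel_sum_sq[OF B]] by (simp add: w_def X_eq)
    also have "\<dots> \<le> (R + hnorm ip g)^2"
      using hnorm_diff_triangle[OF XH g zero_mem, of k] R[of k] hnorm_nonneg[OF XH]
      by (intro power_mono) auto
    finally show ?thesis .
  qed
  have "(\<lambda>k. \<Sum>n. of_real (b (Suc n)) * w k n * of_nat (Suc n) powr (\<i> * of_real \<beta>)) \<longlonglongrightarrow> 0"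
    using sums_summable[OF hnorm_kernel_sum_sq[OF B]]
    by (intro weighted_series_tendsto_0[OF b_sq a_nonneg b_supp _ bounded pointwise])
      (auto simp: w_def norm_Suc_powr simp del: of_nat_Suc)
  moreover have "(\<Sum>n. of_real (b (Suc n)) * w k n * of_nat (Suc n) powr (\<i> * of_real \<beta>)) = ip (fbeta b \<rho> \<beta>) (X k)" for k
    using sums_unique[OF ip_fbeta_kernel_sum[OF f_conv f B]] by (simp add: w_def X_eq)
  moreover have "(\<lambda>k. ip (fbeta b \<rho> \<beta>) (X k)) \<longlonglongrightarrow> ip (fbeta b \<rho> \<beta>) g"
    using f XH g Xg by (intro hconverges_ip hconverges_const)
  ultimately show ?thesis
    using LIMSEQ_unique by auto
qed

lemma hnorm_fbeta: "fbeta b \<rho> 0 \<in> H \<Longrightarrow> hnorm ip (fbeta b \<rho> \<beta>) = hnorm ip (fbeta b \<rho> 0)"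
  using ip_vshift[of "fbeta b \<rho> 0" "fbeta b \<rho> 0" \<beta>] vshift_fbeta[of \<beta> b \<rho> 0] by (simp add: hnorm_def)

lemma adj_domain_eq_0:
  assumes f_conv: "\<And>\<beta> s. s \<in> halfplane \<rho> \<Longrightarrow> summable (\<lambda>n. of_nat (Suc n) powr (\<i> * of_real \<beta>)
      * of_real (b (Suc n)) * of_nat (Suc n) powr (- s))"
    and total: "total_in H ip (range (fbeta b \<rho>))"
    and T_lin: "linear_on (cspan (range (fbeta b \<rho>))) T"
    and T_f: "\<And>\<beta>. T (fbeta b \<rho> \<beta>) = (\<lambda>s. \<i> * of_real \<beta> * fbeta b \<rho> \<beta> s)"
    and b_sq: "summable (\<lambda>n. b (Suc n) ^ 2 / a (Suc n))" and b_supp: "\<And>n. a (Suc n) = 0 \<Longrightarrow> b (Suc n) = 0"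
  shows "adj_domain H ip (cspan (range (fbeta b \<rho>))) T = {\<lambda>_. 0}"
proof
  have f: "fbeta b \<rho> \<beta> \<in> H" for \<beta>
    using total unfolding total_in_def by blast
  have D: "cspan (range (fbeta b \<rho>)) \<subseteq> H"
    using f by (intro cspan_subset) blast
  have TD: "T g \<in> H" if g: "g \<in> cspan (range (fbeta b \<rho>))" for g
  proof -
    obtain B d where "finite B" "B \<subseteq> UNIV" and g: "g = (\<lambda>s. \<Sum>\<beta>\<in>B. d \<beta> * fbeta b \<rho> \<beta> s)"
      using g by (rule cspan_imageE)
    then show ?thesis
      using f scale_mem by (simp add: linear_on_cspan_sum[OF T_lin] T_f sum_mem)
  qed
  show "{\<lambda>_. 0} \<subseteq> adj_domain H ip (cspan (range (fbeta b \<rho>))) T"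
    using zero_mem TD D ip_zero_right by (auto simp: adj_domain_def)
  show "adj_domain H ip (cspan (range (fbeta b \<rho>))) T \<subseteq> {\<lambda>_. 0}"
  proof
    fix g
    assume "g \<in> adj_domain H ip (cspan (range (fbeta b \<rho>))) T"
    then obtain h where g: "g \<in> H" and h: "h \<in> H"
      and adjoint: "\<And>f. f \<in> cspan (range (fbeta b \<rho>)) \<Longrightarrow> ip (T f) g = ip f h"
      unfolding adj_domain_def by blast
    define M where "M = hnorm ip (fbeta b \<rho> 0)"
    have f_norm: "hnorm ip (fbeta b \<rho> \<beta>) = M" for \<beta>
      unfolding M_def using hnorm_fbeta[OF f] .
    have decay: "cmod (ip (fbeta b \<rho> \<beta>) g) \<le> M * hnorm ip h / \<beta>" if "\<beta> \<ge> 1" for \<beta>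
      using adjoint_ip_eigenvector_bound[OF f g h, of \<beta>] adjoint[OF cspan_superset[OF rangeI]] T_f f_norm that
      by simp
    have "ip (fbeta b \<rho> \<beta>) g = 0" for \<beta>
      using hnorm_nonneg[OF f] hnorm_nonneg[OF h] f_norm[of 0]
      by (intro fbeta_orthogonal_if_decay[OF f_conv f f_norm b_sq b_supp g _ decay]) auto
    then show "g \<in> {\<lambda>_. 0}"
      using total_orthogonal_eq_0[OF total g] by auto
  qed
qed

end

theorem lemma5p7:
  fixes \<rho> :: real and a b :: "nat \<Rightarrow> real"
    and H :: "(complex \<Rightarrow> complex) set"
    and ip :: "(complex \<Rightarrow> complex) \<Rightarrow> (complex \<Rightarrow> complex) \<Rightarrow> complex"
    and T :: "(complex \<Rightarrow> complex) \<Rightarrow> (complex \<Rightarrow> complex)"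
  assumes a_nonneg: "\<forall>n\<ge>1. a n \<ge> 0"
    and kernel_conv: "\<forall>x>2*\<rho>. summable (\<lambda>n. a (Suc n) * real (Suc n) powr (- x))"
    and rkhs: "is_rkhs H ip \<rho> (dkernel a \<rho>)"
    and adm: "admissible b"
    and supp_eq: "supp b = supp a"
    and f_conv: "\<forall>\<beta>::real. \<forall>s\<in>halfplane \<rho>. summable (\<lambda>n. of_nat (Suc n) powr (\<i> * of_real \<beta>)
                    * complex_of_real (b (Suc n)) * of_nat (Suc n) powr (- s))"
    and total: "total_in H ip (range (fbeta b \<rho>))"
    and T_lin: "linear_on (cspan (range (fbeta b \<rho>))) T"
    and T_f: "\<forall>\<beta>::real. T (fbeta b \<rho> \<beta>) = (\<lambda>s. \<i> * of_real \<beta> * fbeta b \<rho> \<beta> s)"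
  shows "T_homogeneous H ip (cspan (range (fbeta b \<rho>))) T
    \<and> ((\<exists>\<delta>>0. summable (\<lambda>n. real (Suc n) powr (2 * \<delta>) * (b (Suc n))\<^sup>2 / a (Suc n)))
        \<longrightarrow> adj_domain H ip (cspan (range (fbeta b \<rho>))) T = {\<lambda>_. 0})"
proof -
  interpret D: dirichlet_rkhs H ip \<rho> a
    using rkhs a_nonneg kernel_conv by unfold_locales auto
  have T_eigen: "T (fbeta b \<rho> \<beta>) = (\<lambda>s. \<i> * of_real \<beta> * fbeta b \<rho> \<beta> s)" for \<beta>
    using T_f by blast
  have "T_homogeneous H ip (cspan (range (fbeta b \<rho>))) T"
    using D.unitary_vshift vshift_fbeta T_lin T_eigen by (rule T_homogeneous_if_vshift_eigenfamily)
  moreover have "adj_domain H ip (cspan (range (fbeta b \<rho>))) T = {\<lambda>_. 0}"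
    if weighted: "\<exists>\<delta>>0. summable (\<lambda>n. real (Suc n) powr (2 * \<delta>) * (b (Suc n))\<^sup>2 / a (Suc n))"
  proof (rule D.adj_domain_eq_0[OF _ total T_lin T_eigen])
    show "summable (\<lambda>n. of_nat (Suc n) powr (\<i> * of_real \<beta>) * of_real (b (Suc n)) * of_nat (Suc n) powr (- s))"
      if "s \<in> halfplane \<rho>" for \<beta> s
      using f_conv \<open>s \<in> halfplane \<rho>\<close> by blast
    show "summable (\<lambda>n. b (Suc n) ^ 2 / a (Suc n))"
      using weighted a_nonneg by (auto intro: summable_if_summable_powr_mult[where r = "2 * _"])
    show "b (Suc n) = 0" if "a (Suc n) = 0" for n
      using supp_eq \<open>a (Suc n) = 0\<close> unfolding supp_def by auto
  qed
  ultimately show ?thesis by blast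
qed

end
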